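(* Let $X_1,X_2$, $A,B,C,D$, $X$, $\mathcal{A}$, $M_1,M_2$ be as in the context (with arbitrary $L\ge0$), and assume that $A$ and $D$ are boundedly invertible. (a) If $A$ and $D$ are sectorial, then for each $\psi\in[\omega(A)\vee\omega(D),\pi)$ the following are equivalent: (1) $\mathcal{A}$ is an invertible sectorial operator of angle $\psi$; (2) for all $\phi>\psi$ and for one $j\in\{1,2\}$, $M_j(\lambda)^{-1}\in\mathscr{L}(X_j)$ for all $\lambda\in\complement\overline{\Sigma_\phi}\cup\{0\}$ and $\sup\{\|M_j(\lambda)^{-1}\|:\lambda\in\complement\overline{\Sigma_\phi}\}<\infty$. (b) If $A$ and $D$ are $\mathcal{R}$-sectorial, then for each $\psi\in[\omega_{\mathcal{R}}(A)\vee\omega_{\mathcal{R}}(D),\pi)$ the following are equivalent: (1) $\mathcal{A}$ is an invertible $\mathcal{R}$-sectorial operator of angle $\psi$; (2) for all $\phi>\psi$ and for one $j\in\{1,2\}$, $M_j(\lambda)^{-1}\in\mathscr{L}(X_j)$ for all $\lambda\in\complement\overline{\Sigma_\phi}\cup\{0\}$ and $\mathcal{R}(M_j(\lambda)^{-1}:\lambda\in\complement\overline{\Sigma_\phi})<\infty$.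
   Context: All Banach spaces are complex. For $\psi\in(0,\pi)$, $\Sigma_\psi=\{z\in\mathbb{C}\setminus\{0\}:|\arg z|<\psi\}$, $\complement\overline{\Sigma_\psi}=\mathbb{C}\setminus\overline{\Sigma_\psi}$. A linear operator $T$ on a Banach space $Y$ is sectorial if there is $\omega\in(0,\pi)$ with $\sigma(T)\subseteq\overline{\Sigma_\omega}$, $\overline{\mathsf{D}(T)}=\overline{\mathsf{R}(T)}=Y$ and $\sup_{\lambda\in\complement\overline{\Sigma_\omega}}\|\lambda(\lambda-T)^{-1}\|<\infty$; $\omega(T)$ is the infimum of such $\omega$. A family $\mathscr{J}\subseteq\mathscr{L}(E,F)$ is $\mathcal{R}$-bounded if there is $K$ with $\mathbb{E}\|\sum_{n=1}^m\varepsilon_nT_nx_n\|^2\le K^2\mathbb{E}\|\sum_{n=1}^m\varepsilon_nx_n\|^2$ for all $m$, $T_n\in\mathscr{J}$, $x_n\in E$ ($\varepsilon_n$ independent symmetric $\pm1$-valued random variables); the least $K$ is $\mathcal{R}(\mathscr{J})$. Sectorial $T$ is $\mathcal{R}$-sectorial if for some $\sigma\in(\omega(T),\pi)$, $\{\lambda(\lambda-T)^{-1}:\lambda\in\complement\overline{\Sigma_\sigma}\}$ is $\mathcal{R}$-bounded; $\omega_{\mathcal{R}}(T)$ is the infimum of such $\sigma$. "Of angle $\psi$" means $\omega(\cdot)\le\psi$, resp. $\omega_{\mathcal{R}}(\cdot)\le\psi$. Setting: $X_1,X_2$ Banach spaces; $A$ on $X_1$ and $D$ on $X_2$ closed densely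 defined; $B:\mathsf{D}(B)\subseteq X_2\to X_1$, $C:\mathsf{D}(C)\subseteq X_1\to X_2$ linear with $\mathsf{D}(D)\subseteq\mathsf{D}(B)$, $\mathsf{D}(A)\subseteq\mathsf{D}(C)$ and constants $c_A,c_D,L\ge0$ with $\|Cx\|\le c_A\|Ax\|+L\|x\|$ ($x\in\mathsf{D}(A)$), $\|By\|\le c_D\|Dy\|+L\|y\|$ ($y\in\mathsf{D}(D)$). $X=X_1\times X_2$, $\mathcal{A}=\begin{bmatrix}A&B\\C&D\end{bmatrix}$ with $\mathsf{D}(\mathcal{A})=\mathsf{D}(A)\times\mathsf{D}(D)$. For $\lambda\in\rho(A)\cap\rho(D)$: $M_1(\lambda)=I-B(\lambda-D)^{-1}C(\lambda-A)^{-1}$, $M_2(\lambda)=I-C(\lambda-A)^{-1}B(\lambda-D)^{-1}$. *)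

theory Defs
  imports "HOL-Analysis.Analysis"
begin

text \<open>The distribution has no class of complex vector spaces, so we introduce one:
a real vector space with a compatible complex scalar multiplication.\<close>

class cplx_vector = real_vector +
  fixes scaleC :: "complex \<Rightarrow> 'a \<Rightarrow> 'a" (infixr \<open>*\<^sub>C\<close> 75)
  assumes scaleC_add_right: "a *\<^sub>C (x + y) = a *\<^sub>C x + a *\<^sub>C y"
    and scaleC_add_left: "(a + b) *\<^sub>C x = a *\<^sub>C x + b *\<^sub>C x"
    and scaleC_scaleC: "a *\<^sub>C (b *\<^sub>C x) = (a * b) *\<^sub>C x"
    and scaleC_one: "1 *\<^sub>C x = x"
    and scaleR_scaleC: "scaleR r x = (complex_of_real r) *\<^sub>C x"

class cplx_normed_vector = cplx_vector + real_normed_vector +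
  assumes norm_scaleC: "norm (a *\<^sub>C x) = cmod a * norm x"

instantiation prod :: (cplx_vector, cplx_vector) cplx_vector
begin
definition scaleC_prod_def: "a *\<^sub>C x = (a *\<^sub>C fst x, a *\<^sub>C snd x)"
instance
  by standard (auto simp: scaleC_prod_def scaleC_add_right scaleC_add_left
      scaleC_scaleC scaleC_one scaleR_scaleC scaleR_prod_def)
end

instance prod :: (cplx_normed_vector, cplx_normed_vector) cplx_normed_vector
proof
  fix a :: complex and x :: "'a \<times> 'b"
  have "norm (a *\<^sub>C x) = sqrt ((cmod a * norm (fst x))\<^sup>2 + (cmod a * norm (snd x))\<^sup>2)"
    by (simp add: scaleC_prod_def norm_prod_def norm_scaleC)
  also have "\<dots> = cmod a * sqrt ((norm (fst x))\<^sup>2 + (norm (snd x))\<^sup>2)"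
    by (simp add: power_mult_distrib real_sqrt_mult distrib_left[symmetric])
  finally show "norm (a *\<^sub>C x) = cmod a * norm x"
    by (simp add: norm_prod_def)
qed

definition csubspace :: "'a::cplx_vector set \<Rightarrow> bool" where
  "csubspace S \<longleftrightarrow> 0 \<in> S \<and> (\<forall>x\<in>S. \<forall>y\<in>S. x + y \<in> S) \<and> (\<forall>c. \<forall>x\<in>S. c *\<^sub>C x \<in> S)"

definition lin_op :: "'a::cplx_vector set \<Rightarrow> ('a \<Rightarrow> 'b::cplx_vector) \<Rightarrow> bool" where
  "lin_op S T \<longleftrightarrow> csubspace S \<and> (\<forall>x\<in>S. \<forall>y\<in>S. T (x + y) = T x + T y)
      \<and> (\<forall>c. \<forall>x\<in>S. T (c *\<^sub>C x) = c *\<^sub>C T x)"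

definition closed_op :: "'a::{cplx_normed_vector} set \<Rightarrow> ('a \<Rightarrow> 'b::cplx_normed_vector) \<Rightarrow> bool" where
  "closed_op S T \<longleftrightarrow> lin_op S T \<and> closed {(x, T x) | x. x \<in> S}"

definition densely_defined :: "'a::cplx_normed_vector set \<Rightarrow> bool" where
  "densely_defined S \<longleftrightarrow> closure S = UNIV"

definition bdd_op :: "('a::cplx_normed_vector \<Rightarrow> 'b::cplx_normed_vector) \<Rightarrow> bool" where
  "bdd_op F \<longleftrightarrow> lin_op UNIV F \<and> (\<exists>K. \<forall>x. norm (F x) \<le> K * norm x)"

definition bdd_invertible :: "'a::cplx_normed_vector set \<Rightarrow> ('a \<Rightarrow> 'b::cplx_normed_vector) \<Rightarrow> bool" where
  "bdd_invertible S T \<longleftrightarrow> bij_betw T S UNIV \<and> bdd_op (inv_into S T)"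

definition resolvent_set :: "'a::cplx_normed_vector set \<Rightarrow> ('a \<Rightarrow> 'a) \<Rightarrow> complex set" where
  "resolvent_set S T = {z. bdd_invertible S (\<lambda>x. z *\<^sub>C x - T x)}"

definition spectrum_op :: "'a::cplx_normed_vector set \<Rightarrow> ('a \<Rightarrow> 'a) \<Rightarrow> complex set" where
  "spectrum_op S T = - resolvent_set S T"

definition resolvent :: "'a::cplx_normed_vector set \<Rightarrow> ('a \<Rightarrow> 'a) \<Rightarrow> complex \<Rightarrow> 'a \<Rightarrow> 'a" where
  "resolvent S T z = inv_into S (\<lambda>x. z *\<^sub>C x - T x)"

definition sector :: "real \<Rightarrow> complex set" where
  "sector \<psi> = {z. z \<noteq> 0 \<and> \<bar>Arg z\<bar> < \<psi>}"

definition csector :: "real \<Rightarrow> complex set" where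
  "csector \<psi> = - closure (sector \<psi>)"

definition sectorial_with :: "'a::cplx_normed_vector set \<Rightarrow> ('a \<Rightarrow> 'a) \<Rightarrow> real \<Rightarrow> bool" where
  "sectorial_with S T \<omega> \<longleftrightarrow> lin_op S T \<and> 0 < \<omega> \<and> \<omega> < pi
     \<and> spectrum_op S T \<subseteq> closure (sector \<omega>)
     \<and> closure S = UNIV \<and> closure (T ` S) = UNIV
     \<and> (\<exists>K. \<forall>z\<in>csector \<omega>. onorm (\<lambda>y. z *\<^sub>C resolvent S T z y) \<le> K)"

definition sectorial :: "'a::cplx_normed_vector set \<Rightarrow> ('a \<Rightarrow> 'a) \<Rightarrow> bool" where
  "sectorial S T \<longleftrightarrow> (\<exists>\<omega>. sectorial_with S T \<omega>)"

definition sect_angle :: "'a::cplx_normed_vector set \<Rightarrow> ('a \<Rightarrow> 'a) \<Rightarrow> real" where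
  "sect_angle S T = Inf {\<omega>. sectorial_with S T \<omega>}"

text \<open>Expectation of a function of m independent symmetric \<plusminus>1-valued random
  variables \<epsilon>_0..\<epsilon>_(m-1): the average over all 2^m sign patterns.\<close>
definition signs :: "nat \<Rightarrow> real list set" where
  "signs m = {es. length es = m \<and> set es \<subseteq> {-1, 1}}"

definition rad_exp :: "nat \<Rightarrow> (real list \<Rightarrow> real) \<Rightarrow> real" where
  "rad_exp m f = (\<Sum>es\<in>signs m. f es) / 2 ^ m"

definition R_bound :: "('a::cplx_normed_vector \<Rightarrow> 'b::cplx_normed_vector) set \<Rightarrow> real \<Rightarrow> bool" where
  "R_bound J K \<longleftrightarrow> (\<forall>m Ts xs. (\<forall>n<m. Ts n \<in> J) \<longrightarrow>
      rad_exp m (\<lambda>es. (norm (\<Sum>n<m. (es ! n) *\<^sub>R Ts n (xs n)))\<^sup>2)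
        \<le> K\<^sup>2 * rad_exp m (\<lambda>es. (norm (\<Sum>n<m. (es ! n) *\<^sub>R xs n))\<^sup>2))"

definition R_bounded :: "('a::cplx_normed_vector \<Rightarrow> 'b::cplx_normed_vector) set \<Rightarrow> bool" where
  "R_bounded J \<longleftrightarrow> (\<exists>K. R_bound J K)"

definition R_sectorial_with :: "'a::cplx_normed_vector set \<Rightarrow> ('a \<Rightarrow> 'a) \<Rightarrow> real \<Rightarrow> bool" where
  "R_sectorial_with S T \<sigma> \<longleftrightarrow> sectorial S T \<and> sect_angle S T < \<sigma> \<and> \<sigma> < pi
     \<and> R_bounded {(\<lambda>y. z *\<^sub>C resolvent S T z y) | z. z \<in> csector \<sigma>}"

definition R_sectorial :: "'a::cplx_normed_vector set \<Rightarrow> ('a \<Rightarrow> 'a) \<Rightarrow> bool" where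
  "R_sectorial S T \<longleftrightarrow> (\<exists>\<sigma>. R_sectorial_with S T \<sigma>)"

definition R_angle :: "'a::cplx_normed_vector set \<Rightarrow> ('a \<Rightarrow> 'a) \<Rightarrow> real" where
  "R_angle S T = Inf {\<sigma>. R_sectorial_with S T \<sigma>}"

definition block_op :: "('a \<Rightarrow> 'a) \<Rightarrow> ('b \<Rightarrow> 'a) \<Rightarrow> ('a \<Rightarrow> 'b) \<Rightarrow> ('b \<Rightarrow> 'b)
    \<Rightarrow> ('a::cplx_normed_vector \<times> 'b::cplx_normed_vector) \<Rightarrow> 'a \<times> 'b" where
  "block_op A B C D = (\<lambda>(x, y). (A x + B y, C x + D y))"

definition M1 :: "'a::cplx_normed_vector set \<Rightarrow> ('a \<Rightarrow> 'a) \<Rightarrow> ('b \<Rightarrow> 'a) \<Rightarrow> ('a \<Rightarrow> 'b) \<Rightarrow> 'b::cplx_normed_vector set \<Rightarrow> ('b \<Rightarrow> 'b)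
    \<Rightarrow> complex \<Rightarrow> 'a \<Rightarrow> 'a" where
  "M1 SA A B C SD D z = (\<lambda>x. x - B (resolvent SD D z (C (resolvent SA A z x))))"

definition M2 :: "'a::cplx_normed_vector set \<Rightarrow> ('a \<Rightarrow> 'a) \<Rightarrow> ('b \<Rightarrow> 'a) \<Rightarrow> ('a \<Rightarrow> 'b) \<Rightarrow> 'b::cplx_normed_vector set \<Rightarrow> ('b \<Rightarrow> 'b)
    \<Rightarrow> complex \<Rightarrow> 'b \<Rightarrow> 'b" where
  "M2 SA A B C SD D z = (\<lambda>y. y - C (resolvent SA A z (B (resolvent SD D z y))))"

end

(*
  For z in the resolvent sets of A and D, z - \<A> factors through the Schur complement
  M1(z) (z - A) of z - D.  So z - \<A> is invertible iff M1(z) is, and each inverse is an explicit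
  expression in the other, in z R(z, A), z R(z, D) and the bounded operators
  B R(z, D) = B D^-1 (z R(z, D) - I) and C R(z, A) = C A^-1 (z R(z, A) - I); recovering M1(z)^-1
  from (z - \<A>)^-1 also uses a bound of A x by \<A> (x, y), which the bounded inverse theorem
  extracts from the invertibility of \<A>.  M2 enters through (I - P Q)^-1 = I + P (I - Q P)^-1 Q.
  Uniform bounds and R-bounds are both preserved by sums, compositions and pairing, so the same
  expressions transfer either kind of bound, giving (a) and (b) at once.
*)

theory Submission
  imports Defs
begin

section \<open>Complex linear operators\<close>

lemma scaleC_zero_left [simp]: "(0::complex) *\<^sub>C x = (0::'a::cplx_vector)"
  by (metis add_cancel_right_right add_0 scaleC_add_left)

lemma scaleC_zero_right [simp]: "a *\<^sub>C (0::'a::cplx_vector) = 0"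
  by (metis add_cancel_right_right add_0 scaleC_add_right)

lemma scaleC_minus_right: "a *\<^sub>C (- x) = - (a *\<^sub>C (x::'a::cplx_vector))"
  by (metis eq_neg_iff_add_eq_0 scaleC_add_right scaleC_zero_right)

lemma scaleC_minus_left: "(- a) *\<^sub>C x = - (a *\<^sub>C (x::'a::cplx_vector))"
  by (metis eq_neg_iff_add_eq_0 scaleC_add_left scaleC_zero_left)

lemma scaleC_diff_right: "a *\<^sub>C (x - y) = a *\<^sub>C x - a *\<^sub>C (y::'a::cplx_vector)"
  unfolding diff_conv_add_uminus by (simp only: scaleC_add_right scaleC_minus_right)

lemma scaleC_Pair: "a *\<^sub>C (x, y) = (a *\<^sub>C x, a *\<^sub>C y)"
  by (simp add: scaleC_prod_def)

lemma csubspace_Times: "csubspace S \<Longrightarrow> csubspace T \<Longrightarrow> csubspace (S \<times> T)"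
  unfolding csubspace_def by (auto simp: scaleC_prod_def zero_prod_def)

lemma csubspace_UNIV [simp]: "csubspace UNIV"
  by (simp add: csubspace_def)

lemma lin_op_add: "lin_op S T \<Longrightarrow> x \<in> S \<Longrightarrow> y \<in> S \<Longrightarrow> T (x + y) = T x + T y"
  by (simp add: lin_op_def)

lemma lin_op_scaleC: "lin_op S T \<Longrightarrow> x \<in> S \<Longrightarrow> T (c *\<^sub>C x) = c *\<^sub>C T x"
  by (simp add: lin_op_def)

lemma lin_op_diff:
  assumes "lin_op S T" "x \<in> S" "y \<in> S"
  shows "T (x - y) = T x - T y"
proof -
  have "(-1) *\<^sub>C y \<in> S"
    using assms unfolding lin_op_def csubspace_def by blast
  then show ?thesis
    using assms lin_op_add[of S T x "(-1) *\<^sub>C y"] lin_op_scaleC[of S T y "-1"]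
    by (simp add: scaleC_minus_left scaleC_one)
qed

lemma bdd_op_iff: "bdd_op F \<longleftrightarrow> lin_op UNIV F \<and> bounded_linear F"
proof
  assume F: "bdd_op F"
  then have "linear F"
    by (intro linearI) (auto simp: bdd_op_def lin_op_def scaleR_scaleC)
  with F show "lin_op UNIV F \<and> bounded_linear F"
    unfolding bdd_op_def bounded_linear_def bounded_linear_axioms_def by (metis mult.commute)
next
  assume "lin_op UNIV F \<and> bounded_linear F"
  then show "bdd_op F"
    unfolding bdd_op_def using bounded_linear.pos_bounded by (metis less_eq_real_def mult.commute)
qed

lemma bdd_op_bounded_linear: "bdd_op F \<Longrightarrow> bounded_linear F"
  by (simp add: bdd_op_iff)

lemma bdd_op_compose: "bdd_op F \<Longrightarrow> bdd_op G \<Longrightarrow> bdd_op (\<lambda>x. F (G x))"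
  by (simp add: bdd_op_iff lin_op_def bounded_linear_compose)

lemma bdd_op_add: "bdd_op F \<Longrightarrow> bdd_op G \<Longrightarrow> bdd_op (\<lambda>x. F x + G x)"
  by (simp add: bdd_op_iff lin_op_def bounded_linear_add scaleC_add_right algebra_simps)

lemma bdd_op_diff: "bdd_op F \<Longrightarrow> bdd_op G \<Longrightarrow> bdd_op (\<lambda>x. F x - G x)"
  by (simp add: bdd_op_iff lin_op_def bounded_linear_sub scaleC_diff_right algebra_simps)

lemma bdd_op_ident: "bdd_op (\<lambda>x. x)"
  by (simp add: bdd_op_iff lin_op_def bounded_linear_ident)

lemma bdd_op_uminus: "bdd_op (\<lambda>x. - x)"
  by (simp add: bdd_op_iff lin_op_def bounded_linear_minus[OF bounded_linear_ident]
      scaleC_minus_right)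

lemma bdd_op_scaleC: "bdd_op (\<lambda>x. c *\<^sub>C x)"
  unfolding bdd_op_def
  by (auto simp: lin_op_def scaleC_add_right scaleC_scaleC mult.commute norm_scaleC
      intro!: exI[of _ "cmod c"])

lemma bdd_op_fst: "bdd_op fst"
  by (simp add: bdd_op_iff lin_op_def scaleC_prod_def bounded_linear_fst)

lemma bdd_op_snd: "bdd_op snd"
  by (simp add: bdd_op_iff lin_op_def scaleC_prod_def bounded_linear_snd)

lemma bdd_op_Pair: "bdd_op F \<Longrightarrow> bdd_op G \<Longrightarrow> bdd_op (\<lambda>x. (F x, G x))"
  by (simp add: bdd_op_iff lin_op_def scaleC_prod_def bounded_linear_Pair)

lemma bdd_op_inl: "bdd_op (\<lambda>x. (x, 0))"
  by (simp add: bdd_op_iff lin_op_def scaleC_prod_def bounded_linear_Pair bounded_linear_ident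
      bounded_linear_zero)

lemma bdd_invertibleI:
  assumes "bdd_op G" "\<And>u. G u \<in> S" "\<And>u. F (G u) = u" "\<And>x. x \<in> S \<Longrightarrow> G (F x) = x"
  shows "bdd_invertible S F" and "inv_into S F = G"
proof -
  have "bij_betw F S UNIV"
    using assms(2-4) by (intro bij_betw_byWitness[where f' = G]) auto
  moreover from this have "inv_into S F = G"
    using assms(2,3) by (intro ext inv_into_f_eq) (auto simp: bij_betw_def)
  ultimately show "bdd_invertible S F" "inv_into S F = G"
    using assms(1) by (auto simp: bdd_invertible_def)
qed

lemma bdd_invertibleD:
  assumes "bdd_invertible S F"
  shows "bdd_op (inv_into S F)" "\<And>u. inv_into S F u \<in> S" "\<And>u. F (inv_into S F u) = u"
    "\<And>x. x \<in> S \<Longrightarrow> inv_into S F (F x) = x"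
  using assms unfolding bdd_invertible_def
  by (auto simp: bij_betw_inv_into_right bij_betw_imp_inj_on inv_into_into bij_betw_def)

lemma bdd_invertible_uminus:
  assumes "bdd_invertible S F"
  shows "bdd_invertible S (\<lambda>x. - F x)"
proof (rule bdd_invertibleI(1))
  show "bdd_op (\<lambda>u. inv_into S F (- u))"
    by (rule bdd_op_compose[OF bdd_invertibleD(1)[OF assms] bdd_op_uminus])
qed (use bdd_invertibleD[OF assms] in auto)

lemma bdd_invertible_uminus_iff: "bdd_invertible S (\<lambda>x. - F x) \<longleftrightarrow> bdd_invertible S F"
  using bdd_invertible_uminus[of S F] bdd_invertible_uminus[of S "\<lambda>x. - F x"] by auto

lemma zero_in_resolvent_set_iff: "0 \<in> resolvent_set S T \<longleftrightarrow> bdd_invertible S T"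
  by (simp add: resolvent_set_def bdd_invertible_uminus_iff)

lemma resolventD:
  assumes "z \<in> resolvent_set S T"
  shows "bdd_op (resolvent S T z)" "\<And>u. resolvent S T z u \<in> S"
    "\<And>u. z *\<^sub>C resolvent S T z u - T (resolvent S T z u) = u"
    "\<And>x. x \<in> S \<Longrightarrow> resolvent S T z (z *\<^sub>C x - T x) = x"
  using bdd_invertibleD[of S "\<lambda>x. z *\<^sub>C x - T x"] assms
  by (auto simp: resolvent_set_def resolvent_def)

lemma resolvent_setI:
  assumes "bdd_op G" "\<And>u. G u \<in> S" "\<And>u. z *\<^sub>C G u - T (G u) = u"
    "\<And>x. x \<in> S \<Longrightarrow> G (z *\<^sub>C x - T x) = x"
  shows "z \<in> resolvent_set S T" and "resolvent S T z = G"
  using bdd_invertibleI[of G S "\<lambda>x. z *\<^sub>C x - T x"] assms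
  by (auto simp: resolvent_set_def resolvent_def)

lemma inv_into_resolvent_eq:
  assumes "z \<in> resolvent_set S T" "bdd_invertible S T"
  shows "inv_into S T (z *\<^sub>C resolvent S T z v - v) = resolvent S T z v"
proof -
  have "z *\<^sub>C resolvent S T z v - v = T (resolvent S T z v)"
    using resolventD(3)[OF assms(1), of v] by (simp add: algebra_simps)
  then show ?thesis
    using bdd_invertibleD(4)[OF assms(2) resolventD(2)[OF assms(1)]] by simp
qed

lemma bdd_invertible_ident_minus_swap:
  assumes P: "bdd_op P" and Q: "bdd_op Q"
    and inv: "bdd_invertible UNIV (\<lambda>y. y - Q (P y))"
  defines "N \<equiv> inv (\<lambda>y. y - Q (P y))"
  shows "bdd_invertible UNIV (\<lambda>x. x - P (Q x))"
    and "inv (\<lambda>x. x - P (Q x)) = (\<lambda>x. x + P (N (Q x)))"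
proof -
  have N: "bdd_op N" "\<And>u. N u - Q (P (N u)) = u" "\<And>y. N (y - Q (P y)) = y"
    using bdd_invertibleD[OF inv] unfolding N_def by auto
  have lQ: "lin_op UNIV Q" using Q by (simp add: bdd_op_iff)
  let ?G = "\<lambda>x. x + P (N (Q x))"
  have G: "bdd_op ?G"
    by (intro bdd_op_add bdd_op_ident bdd_op_compose[OF P] bdd_op_compose[OF N(1) Q])
  have right: "?G x - P (Q (?G x)) = x" for x
    using N(2)[of "Q x"] by (simp add: lin_op_add[OF lQ] algebra_simps)
  have left: "?G (x - P (Q x)) = x" for x
    using N(3)[of "Q x"] by (simp add: lin_op_diff[OF lQ])
  show "bdd_invertible UNIV (\<lambda>x. x - P (Q x))"
    by (rule bdd_invertibleI(1)[OF G UNIV_I right left])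
  show "inv (\<lambda>x. x - P (Q x)) = ?G"
    by (rule bdd_invertibleI(2)[OF G UNIV_I right left])
qed

section \<open>The bounded inverse theorem\<close>

lemma bounded_linear_surj_closure_image_contains_ball:
  fixes f :: "'a::banach \<Rightarrow> 'b::banach"
  assumes "bounded_linear f" "surj f"
  obtains n :: nat and y0 r where "r > 0" "ball y0 r \<subseteq> closure (f ` cball 0 (real n))"
proof -
  define U where "U n = closure (f ` cball 0 (real n))" for n :: nat
  have "y \<in> \<Union> (range U)" for y
  proof -
    obtain x where "y = f x" using \<open>surj f\<close> by (metis surjD)
    moreover obtain n :: nat where "norm x \<le> real n" using real_arch_simple by blast
    ultimately show ?thesis unfolding U_def using closure_subset by fastforce
  qed
  then have "\<Union> (range U) = UNIV" by blast
  moreover have "closed (U n)" for n by (simp add: U_def)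
  ultimately obtain n where "interior (U n) \<noteq> {}"
    using Baire_category_alt[of euclidean "range U"]
    by (force simp: completely_metrizable_space_euclidean closed_closedin[symmetric])
  then obtain y0 where "y0 \<in> interior (U n)" by blast
  then obtain r where "r > 0" "ball y0 r \<subseteq> U n"
    by (meson open_contains_ball open_interior interior_subset subset_trans)
  then show thesis unfolding U_def by (rule that)
qed

lemma bounded_linear_surj_approx_preimage_small:
  fixes f :: "'a::banach \<Rightarrow> 'b::banach"
  assumes "bounded_linear f" "surj f"
  obtains c r where "c \<ge> 0" "r > 0"
    "\<And>y e. norm y < r \<Longrightarrow> e > 0 \<Longrightarrow> \<exists>x. norm x \<le> c \<and> norm (y - f x) < e"
proof -
  interpret f: bounded_linear f by fact
  obtain n :: nat and y0 r where r: "r > 0" "ball y0 r \<subseteq> closure (f ` cball 0 (real n))"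
    by (rule bounded_linear_surj_closure_image_contains_ball[OF assms])
  have approx: "\<exists>x. norm x \<le> 2 * real n \<and> norm (y - f x) < e" if "norm y < r" "e > 0" for y e
  proof -
    have "y0 + y \<in> ball y0 r" "y0 \<in> ball y0 r"
      using that(1) r(1) by (simp_all add: dist_norm)
    then have "y0 + y \<in> closure (f ` cball 0 (real n))" "y0 \<in> closure (f ` cball 0 (real n))"
      using r(2) by blast+
    moreover have "e / 2 > 0" using \<open>e > 0\<close> by simp
    ultimately obtain z1 z2 where "z1 \<in> f ` cball 0 (real n)" "dist z1 (y0 + y) < e / 2"
      and "z2 \<in> f ` cball 0 (real n)" "dist z2 y0 < e / 2"
      unfolding closure_approachable by meson
    then obtain x1 x2 where x1: "x1 \<in> cball 0 (real n)" "dist (f x1) (y0 + y) < e / 2"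
      and x2: "x2 \<in> cball 0 (real n)" "dist (f x2) y0 < e / 2"
      by blast
    have "y - f (x1 - x2) = ((y0 + y) - f x1) + (f x2 - y0)"
      by (simp add: f.diff algebra_simps)
    then have "norm (y - f (x1 - x2)) \<le> norm ((y0 + y) - f x1) + norm (f x2 - y0)"
      by (metis norm_triangle_ineq)
    moreover have "norm ((y0 + y) - f x1) < e / 2" "norm (f x2 - y0) < e / 2"
      using x1(2) x2(2) by (simp_all add: dist_norm norm_minus_commute)
    ultimately have "norm (y - f (x1 - x2)) < e" by linarith
    moreover have "norm (x1 - x2) \<le> 2 * real n"
      using x1(1) x2(1) norm_triangle_ineq4[of x1 x2] by simp
    ultimately show ?thesis by blast
  qed
  show thesis by (rule that[OF _ r(1) approx]) simp
qed

lemma bounded_linear_surj_approx_preimage: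
  fixes f :: "'a::banach \<Rightarrow> 'b::banach"
  assumes "bounded_linear f" "surj f"
  obtains M where "M > 0" "\<And>y e. e > 0 \<Longrightarrow> \<exists>x. norm x \<le> M * norm y \<and> norm (y - f x) < e"
proof -
  interpret f: bounded_linear f by fact
  obtain c r where c: "c \<ge> 0" and r: "r > 0"
    and small: "\<And>y e. norm y < r \<Longrightarrow> e > 0 \<Longrightarrow> \<exists>x. norm x \<le> c \<and> norm (y - f x) < e"
    using bounded_linear_surj_approx_preimage_small[OF assms] by blast
  define M where "M = 2 * c / r + 1"
  have "M > 0" using c r(1) by (simp add: M_def add_nonneg_pos)
  moreover have "\<exists>x. norm x \<le> M * norm y \<and> norm (y - f x) < e" if "e > 0" for y e
  proof (cases "y = 0")
    case True
    then show ?thesis using that by (intro exI[of _ 0]) simp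
  next
    case False
    define t where "t = r / (2 * norm y)"
    have t: "t > 0" "norm (t *\<^sub>R y) < r" using r False by (simp_all add: t_def)
    then obtain x' where x': "norm x' \<le> c" "norm (t *\<^sub>R y - f x') < e * t"
      using small[of "t *\<^sub>R y" "e * t"] \<open>e > 0\<close> by auto
    have "norm (x' /\<^sub>R t) = norm x' / t" using t by (simp add: divide_inverse_commute)
    also have "\<dots> \<le> c / t" using x' t by (simp add: divide_right_mono)
    also have "\<dots> = 2 * c / r * norm y" using r False by (simp add: t_def)
    also have "\<dots> \<le> M * norm y" by (simp add: M_def distrib_right)
    finally have bound: "norm (x' /\<^sub>R t) \<le> M * norm y" .
    have "y - f (x' /\<^sub>R t) = (t *\<^sub>R y - f x') /\<^sub>R t"
      using t by (simp add: f.scaleR algebra_simps)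
    then have "norm (y - f (x' /\<^sub>R t)) = norm (t *\<^sub>R y - f x') / t"
      using t by (simp add: divide_inverse_commute)
    also have "\<dots> < e" using x' t by (simp add: divide_less_eq mult.commute)
    finally show ?thesis using bound by blast
  qed
  ultimately show thesis by (rule that)
qed

text \<open>Successive approximation: approximating the current residual up to half its size makes
  the residuals and the corrections decay geometrically.\<close>

lemma bounded_linear_approx_preimage_series:
  fixes f :: "'a::real_normed_vector \<Rightarrow> 'b::real_normed_vector"
  assumes f: "bounded_linear f" and M: "M \<ge> 0" and "y \<noteq> 0"
    and approx: "\<And>y e. e > 0 \<Longrightarrow> \<exists>x. norm x \<le> M * norm y \<and> norm (y - f x) < e"
  obtains x where "\<And>k. norm (x k) \<le> M * norm y * (1 / 2) ^ k" "(\<lambda>k. f (x k)) sums y"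
proof -
  define g where "g y e = (SOME x. norm x \<le> M * norm y \<and> norm (y - f x) < e)" for y e
  have g: "norm (g y e) \<le> M * norm y" "norm (y - f (g y e)) < e" if "e > 0" for y e
    using someI_ex[OF approx[OF that, of y]] unfolding g_def by auto
  define e where "e k = norm y / 2 ^ Suc k" for k :: nat
  have e: "e k > 0" for k using \<open>y \<noteq> 0\<close> by (simp add: e_def)
  define r where "r = rec_nat y (\<lambda>k rk. rk - f (g rk (e k)))"
  have r0: "r 0 = y" and rS: "r (Suc k) = r k - f (g (r k) (e k))" for k
    by (simp_all add: r_def)
  define x where "x k = g (r k) (e k)" for k
  have rn: "norm (r k) \<le> norm y * (1 / 2) ^ k" for k
  proof (cases k)
    case (Suc j)
    have "norm (r (Suc j)) < e j" using g(2)[OF e] by (simp add: rS)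
    then show ?thesis using Suc by (simp add: e_def power_one_over field_simps)
  qed (simp add: r0)
  have xn: "norm (x k) \<le> M * norm y * (1 / 2) ^ k" for k
  proof -
    have "norm (x k) \<le> M * norm (r k)" using g(1)[OF e] by (simp add: x_def)
    also have "\<dots> \<le> M * (norm y * (1 / 2) ^ k)" using rn M by (simp add: mult_left_mono)
    finally show ?thesis by (simp add: mult.assoc)
  qed
  have "(\<lambda>k. norm y * (1 / 2) ^ k) \<longlonglongrightarrow> 0"
    using tendsto_mult_right_zero[OF LIMSEQ_power_zero[of "1 / 2 :: real"]] by simp
  then have "r \<longlonglongrightarrow> 0"
    by (rule Lim_null_comparison[rotated]) (use rn in simp)
  then have "(\<lambda>n. y - r n) \<longlonglongrightarrow> y"
    using tendsto_diff[OF tendsto_const, of r 0 _ y] by simp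
  moreover have "(\<Sum>k<n. f (x k)) = y - r n" for n
    by (induction n) (simp_all add: r0 rS x_def)
  ultimately have "(\<lambda>k. f (x k)) sums y" unfolding sums_def by simp
  with xn show thesis by (rule that)
qed

lemma bounded_linear_approx_preimage_exact:
  fixes f :: "'a::banach \<Rightarrow> 'b::real_normed_vector"
  assumes f: "bounded_linear f" and M: "M \<ge> 0"
    and approx: "\<And>y e. e > 0 \<Longrightarrow> \<exists>x. norm x \<le> M * norm y \<and> norm (y - f x) < e"
  shows "\<exists>x. f x = y \<and> norm x \<le> 2 * M * norm y"
proof (cases "y = 0")
  case True
  then show ?thesis using bounded_linear.linear[OF f] by (intro exI[of _ 0]) (simp add: linear_0)
next
  case False
  obtain x where xn: "\<And>k. norm (x k) \<le> M * norm y * (1 / 2) ^ k" and sums: "(\<lambda>k. f (x k)) sums y"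
    using bounded_linear_approx_preimage_series[OF f M False approx] by blast
  have geo: "summable (\<lambda>k. M * norm y * (1 / 2) ^ k)"
    by (intro summable_mult summable_geometric) simp
  have snx: "summable (\<lambda>k. norm (x k))"
    using summable_comparison_test'[OF geo, of 0 "\<lambda>k. norm (x k)"] xn by simp
  have "(\<lambda>k. f (x k)) sums f (suminf x)"
    using bounded_linear.sums[OF f summable_sums[OF summable_norm_cancel[OF snx]]] .
  with sums have "f (suminf x) = y" using sums_unique2 by metis
  moreover have "norm (suminf x) \<le> (\<Sum>k. norm (x k))" using summable_norm[OF snx] .
  then have "norm (suminf x) \<le> (\<Sum>k. M * norm y * (1 / 2) ^ k)"
    using suminf_le[OF xn snx geo] by linarith
  then have "norm (suminf x) \<le> 2 * M * norm y"
    by (simp add: suminf_mult suminf_geometric summable_geometric)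
  ultimately show ?thesis by blast
qed

theorem bdd_op_inv:
  fixes F :: "'a::{cplx_normed_vector,banach} \<Rightarrow> 'b::{cplx_normed_vector,banach}"
  assumes "bdd_op F" "bij F"
  shows "bdd_op (inv F)"
proof -
  have lin: "lin_op UNIV F" and bl: "bounded_linear F" using assms(1) by (simp_all add: bdd_op_iff)
  have FI: "F (inv F u) = u" and IF: "inv F (F x) = x" for u x
    using assms(2) by (simp_all add: bij_is_surj surj_f_inv_f bij_is_inj)
  have "inv F (x + y) = inv F x + inv F y" for x y
    using IF[of "inv F x + inv F y"] FI by (simp add: lin_op_add[OF lin])
  moreover have "inv F (c *\<^sub>C x) = c *\<^sub>C inv F x" for c x
    using IF[of "c *\<^sub>C inv F x"] FI by (simp add: lin_op_scaleC[OF lin])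
  ultimately have "lin_op UNIV (inv F)" by (simp add: lin_op_def)
  moreover obtain M where M: "M > 0"
    and approx: "\<And>y e. e > 0 \<Longrightarrow> \<exists>x. norm x \<le> M * norm y \<and> norm (y - F x) < e"
    using bounded_linear_surj_approx_preimage[OF bl bij_is_surj[OF assms(2)]] by blast
  have "norm (inv F y) \<le> 2 * M * norm y" for y
  proof -
    obtain x where "F x = y" "norm x \<le> 2 * M * norm y"
      using bounded_linear_approx_preimage_exact[OF bl less_imp_le[OF M] approx] by blast
    then show ?thesis using IF[of x] by simp
  qed
  ultimately show ?thesis unfolding bdd_op_def by blast
qed

section \<open>R-boundedness\<close>

text \<open>For \<open>Ms = UNIV\<close> this is R-boundedness; for \<open>Ms = {1}\<close> it is uniform boundedness, so both
  parts of the theorem are instances of one argument.\<close>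

definition R_bound_for ::
    "nat set \<Rightarrow> ('a::cplx_normed_vector \<Rightarrow> 'b::cplx_normed_vector) set \<Rightarrow> real \<Rightarrow> bool"
  where "R_bound_for Ms J K \<longleftrightarrow> (\<forall>m\<in>Ms. \<forall>Ts xs. (\<forall>n<m. Ts n \<in> J) \<longrightarrow>
      rad_exp m (\<lambda>es. (norm (\<Sum>n<m. (es ! n) *\<^sub>R Ts n (xs n)))\<^sup>2)
        \<le> K\<^sup>2 * rad_exp m (\<lambda>es. (norm (\<Sum>n<m. (es ! n) *\<^sub>R xs n))\<^sup>2))"

definition R_bounded_for :: "nat set \<Rightarrow> ('a::cplx_normed_vector \<Rightarrow> 'b::cplx_normed_vector) set \<Rightarrow> bool"
  where "R_bounded_for Ms J \<longleftrightarrow> (\<exists>K. R_bound_for Ms J K)"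

lemma R_bounded_for_UNIV: "R_bounded_for UNIV J \<longleftrightarrow> R_bounded J"
  by (simp add: R_bounded_for_def R_bounded_def R_bound_for_def R_bound_def)

lemma rad_exp_mono:
  "(\<And>es. es \<in> signs m \<Longrightarrow> f es \<le> g es) \<Longrightarrow> rad_exp m f \<le> rad_exp m g"
  unfolding rad_exp_def by (rule divide_right_mono) (auto intro: sum_mono)

lemma rad_exp_add: "rad_exp m (\<lambda>es. f es + g es) = rad_exp m f + rad_exp m g"
  unfolding rad_exp_def by (simp add: sum.distrib add_divide_distrib)

lemma rad_exp_cmult: "rad_exp m (\<lambda>es. c * f es) = c * rad_exp m f"
  unfolding rad_exp_def by (simp add: sum_distrib_left)

lemma rad_exp_one_norm_sum: "rad_exp 1 (\<lambda>es. (norm (\<Sum>n<1. (es ! n) *\<^sub>R v n))\<^sup>2) = (norm (v 0))\<^sup>2"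
proof -
  have "signs 1 = {[-1], [1]}"
    unfolding signs_def by (auto simp: length_Suc_conv)
  then show ?thesis by (simp add: rad_exp_def)
qed

lemma R_bound_for_one_iff: "R_bound_for {1} J K \<longleftrightarrow> (\<forall>T\<in>J. \<forall>x. norm (T x) \<le> \<bar>K\<bar> * norm x)"
proof -
  have single: "(\<forall>Ts xs. (\<forall>n<1. Ts n \<in> J) \<longrightarrow> P (Ts (0::nat)) (xs (0::nat))) \<longleftrightarrow> (\<forall>T\<in>J. \<forall>x. P T x)"
    for P :: "('a \<Rightarrow> 'b) \<Rightarrow> 'a \<Rightarrow> bool"
  proof (intro iffI allI impI ballI)
    fix T x
    assume "\<forall>Ts xs. (\<forall>n<1. Ts n \<in> J) \<longrightarrow> P (Ts 0) (xs (0::nat))" "T \<in> J"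
    from this(1)[rule_format, of "\<lambda>_. T" "\<lambda>_. x"] this(2) show "P T x" by simp
  qed auto
  have "R_bound_for {1} J K \<longleftrightarrow> (\<forall>Ts xs. (\<forall>n<1. Ts n \<in> J) \<longrightarrow>
      rad_exp 1 (\<lambda>es. (norm (\<Sum>n<1. (es ! n) *\<^sub>R Ts n (xs n)))\<^sup>2)
        \<le> K\<^sup>2 * rad_exp 1 (\<lambda>es. (norm (\<Sum>n<1. (es ! n) *\<^sub>R xs n))\<^sup>2))"
    by (simp add: R_bound_for_def)
  also have "\<dots> \<longleftrightarrow> (\<forall>T\<in>J. \<forall>x. (norm (T x))\<^sup>2 \<le> K\<^sup>2 * (norm x)\<^sup>2)"
    unfolding rad_exp_one_norm_sum
    by (rule single[where P = "\<lambda>T x. (norm (T x))\<^sup>2 \<le> K\<^sup>2 * (norm x)\<^sup>2"])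
  also have "\<dots> \<longleftrightarrow> (\<forall>T\<in>J. \<forall>x. norm (T x) \<le> \<bar>K\<bar> * norm x)"
  proof -
    have "(norm y)\<^sup>2 \<le> K\<^sup>2 * (norm x)\<^sup>2 \<longleftrightarrow> norm y \<le> \<bar>K\<bar> * norm x" for x :: 'a and y :: 'b
      using abs_le_square_iff[of "norm y" "\<bar>K\<bar> * norm x"] by (simp add: power_mult_distrib abs_mult)
    then show ?thesis by (simp only:)
  qed
  finally show ?thesis .
qed

lemma R_bounded_for_one_iff_onorm:
  assumes "\<And>z. z \<in> Z \<Longrightarrow> bdd_op (F z)"
  shows "R_bounded_for {1} {F z | z. z \<in> Z} \<longleftrightarrow> (\<exists>K. \<forall>z\<in>Z. onorm (F z) \<le> K)"
proof
  assume "R_bounded_for {1} {F z | z. z \<in> Z}"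
  then obtain K where "\<forall>z\<in>Z. \<forall>x. norm (F z x) \<le> \<bar>K\<bar> * norm x"
    unfolding R_bounded_for_def R_bound_for_one_iff by blast
  then show "\<exists>K. \<forall>z\<in>Z. onorm (F z) \<le> K"
    by (intro exI[of _ "\<bar>K\<bar>"] ballI onorm_bound) auto
next
  assume "\<exists>K. \<forall>z\<in>Z. onorm (F z) \<le> K"
  then obtain K where K: "\<And>z. z \<in> Z \<Longrightarrow> onorm (F z) \<le> K" by blast
  have "norm (F z x) \<le> \<bar>K\<bar> * norm x" if "z \<in> Z" for z x
  proof -
    have "norm (F z x) \<le> onorm (F z) * norm x"
      using onorm[of "F z"] assms[OF that] by (simp add: bdd_op_iff)
    also have "\<dots> \<le> \<bar>K\<bar> * norm x"
      using K[OF that] by (intro mult_right_mono) auto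
    finally show ?thesis .
  qed
  then show "R_bounded_for {1} {F z | z. z \<in> Z}"
    unfolding R_bounded_for_def R_bound_for_one_iff by blast
qed

lemma R_bound_for_mono: "R_bound_for Ms J K \<Longrightarrow> Ms' \<subseteq> Ms \<Longrightarrow> J' \<subseteq> J \<Longrightarrow> R_bound_for Ms' J' K"
  unfolding R_bound_for_def by (meson subsetD)

lemma R_bounded_for_mono:
  "R_bounded_for Ms J \<Longrightarrow> Ms' \<subseteq> Ms \<Longrightarrow> J' \<subseteq> J \<Longrightarrow> R_bounded_for Ms' J'"
  unfolding R_bounded_for_def using R_bound_for_mono by blast

lemma R_bound_forD:
  assumes "R_bound_for Ms J K" "m \<in> Ms" "\<And>n. n < m \<Longrightarrow> Ts n \<in> J"
  shows "rad_exp m (\<lambda>es. (norm (\<Sum>n<m. (es ! n) *\<^sub>R Ts n (xs n)))\<^sup>2)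
        \<le> K\<^sup>2 * rad_exp m (\<lambda>es. (norm (\<Sum>n<m. (es ! n) *\<^sub>R xs n))\<^sup>2)"
  using assms unfolding R_bound_for_def by blast

lemma R_bound_for_compose:
  fixes J1 :: "('b::cplx_normed_vector \<Rightarrow> 'c::cplx_normed_vector) set"
    and J2 :: "('a::cplx_normed_vector \<Rightarrow> 'b) set"
  assumes J1: "R_bound_for Ms J1 K1" and J2: "R_bound_for Ms J2 K2"
  shows "R_bound_for Ms {(\<lambda>x. f (g x)) | f g. f \<in> J1 \<and> g \<in> J2} (K1 * K2)"
  unfolding R_bound_for_def
proof (intro ballI allI impI)
  fix m :: nat and Ts and xs :: "nat \<Rightarrow> 'a"
  assume m: "m \<in> Ms" and "\<forall>n<m. Ts n \<in> {(\<lambda>x. f (g x)) | f g. f \<in> J1 \<and> g \<in> J2}"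
  then have "\<forall>n. \<exists>f g. n < m \<longrightarrow> Ts n = (\<lambda>x. f (g x)) \<and> f \<in> J1 \<and> g \<in> J2" by blast
  then obtain F G where FG: "\<And>n. n < m \<Longrightarrow> Ts n = (\<lambda>x. F n (G n x)) \<and> F n \<in> J1 \<and> G n \<in> J2"
    by metis
  have "rad_exp m (\<lambda>es. (norm (\<Sum>n<m. (es ! n) *\<^sub>R F n (G n (xs n))))\<^sup>2)
      \<le> K1\<^sup>2 * rad_exp m (\<lambda>es. (norm (\<Sum>n<m. (es ! n) *\<^sub>R G n (xs n)))\<^sup>2)"
    using R_bound_forD[OF J1 m, of F "\<lambda>n. G n (xs n)"] FG by blast
  also have "\<dots> \<le> K1\<^sup>2 * (K2\<^sup>2 * rad_exp m (\<lambda>es. (norm (\<Sum>n<m. (es ! n) *\<^sub>R xs n))\<^sup>2))"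
    using R_bound_forD[OF J2 m, of G xs] FG by (intro mult_left_mono) auto
  moreover have "(\<Sum>n<m. (es ! n) *\<^sub>R Ts n (xs n)) = (\<Sum>n<m. (es ! n) *\<^sub>R F n (G n (xs n)))" for es
    using FG by (intro sum.cong) auto
  ultimately show "rad_exp m (\<lambda>es. (norm (\<Sum>n<m. (es ! n) *\<^sub>R Ts n (xs n)))\<^sup>2)
      \<le> (K1 * K2)\<^sup>2 * rad_exp m (\<lambda>es. (norm (\<Sum>n<m. (es ! n) *\<^sub>R xs n))\<^sup>2)"
    by (simp add: power_mult_distrib mult.assoc)
qed

lemma norm_add_squared_le:
  "(norm (a + b))\<^sup>2 \<le> 2 * (norm a)\<^sup>2 + 2 * (norm (b::'a::real_normed_vector))\<^sup>2"
proof -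
  have "(norm (a + b))\<^sup>2 \<le> (norm a + norm b)\<^sup>2"
    using power_mono[OF norm_triangle_ineq norm_ge_zero] .
  also have "\<dots> \<le> 2 * (norm a)\<^sup>2 + 2 * (norm b)\<^sup>2"
    using zero_le_power2[of "norm a - norm b"] by (simp add: power2_eq_square algebra_simps)
  finally show ?thesis .
qed

lemma R_bound_for_add:
  fixes J1 J2 :: "('a::cplx_normed_vector \<Rightarrow> 'b::cplx_normed_vector) set"
  assumes J1: "R_bound_for Ms J1 K1" and J2: "R_bound_for Ms J2 K2"
  shows "R_bound_for Ms {(\<lambda>x. f x + g x) | f g. f \<in> J1 \<and> g \<in> J2} (sqrt (2 * (K1\<^sup>2 + K2\<^sup>2)))"
  unfolding R_bound_for_def
proof (intro ballI allI impI)
  fix m :: nat and Ts and xs :: "nat \<Rightarrow> 'a"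
  assume m: "m \<in> Ms" and "\<forall>n<m. Ts n \<in> {(\<lambda>x. f x + g x) | f g. f \<in> J1 \<and> g \<in> J2}"
  then have "\<forall>n. \<exists>f g. n < m \<longrightarrow> Ts n = (\<lambda>x. f x + g x) \<and> f \<in> J1 \<and> g \<in> J2" by blast
  then obtain F G where FG: "\<And>n. n < m \<Longrightarrow> Ts n = (\<lambda>x. F n x + G n x) \<and> F n \<in> J1 \<and> G n \<in> J2"
    by metis
  define E where "E = rad_exp m (\<lambda>es. (norm (\<Sum>n<m. (es ! n) *\<^sub>R xs n))\<^sup>2)"
  have "(\<Sum>n<m. (es ! n) *\<^sub>R Ts n (xs n)) =
      (\<Sum>n<m. (es ! n) *\<^sub>R F n (xs n)) + (\<Sum>n<m. (es ! n) *\<^sub>R G n (xs n))" for es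
    using FG by (simp add: sum.distrib[symmetric] scaleR_add_right[symmetric])
  then have "rad_exp m (\<lambda>es. (norm (\<Sum>n<m. (es ! n) *\<^sub>R Ts n (xs n)))\<^sup>2)
     \<le> rad_exp m (\<lambda>es. 2 * (norm (\<Sum>n<m. (es ! n) *\<^sub>R F n (xs n)))\<^sup>2
            + 2 * (norm (\<Sum>n<m. (es ! n) *\<^sub>R G n (xs n)))\<^sup>2)"
    by (intro rad_exp_mono) (simp add: norm_add_squared_le)
  also have "\<dots> \<le> 2 * (K1\<^sup>2 * E) + 2 * (K2\<^sup>2 * E)"
    unfolding rad_exp_add rad_exp_cmult E_def
    using R_bound_forD[OF J1 m, of F xs] R_bound_forD[OF J2 m, of G xs] FG by auto
  finally show "rad_exp m (\<lambda>es. (norm (\<Sum>n<m. (es ! n) *\<^sub>R Ts n (xs n)))\<^sup>2)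
      \<le> (sqrt (2 * (K1\<^sup>2 + K2\<^sup>2)))\<^sup>2 * rad_exp m (\<lambda>es. (norm (\<Sum>n<m. (es ! n) *\<^sub>R xs n))\<^sup>2)"
    by (simp add: E_def algebra_simps)
qed

lemma R_bound_for_singleton:
  fixes T :: "'a::cplx_normed_vector \<Rightarrow> 'b::cplx_normed_vector"
  assumes "bounded_linear T"
  shows "R_bound_for Ms {T} (onorm T)"
  unfolding R_bound_for_def
proof (intro ballI allI impI)
  fix m :: nat and Ts and xs :: "nat \<Rightarrow> 'a"
  assume "\<forall>n<m. Ts n \<in> {T}"
  then have "(\<Sum>n<m. (es ! n) *\<^sub>R Ts n (xs n)) = T (\<Sum>n<m. (es ! n) *\<^sub>R xs n)" for es
    using bounded_linear.linear[OF assms] by (simp add: linear_sum linear_scale)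
  then show "rad_exp m (\<lambda>es. (norm (\<Sum>n<m. (es ! n) *\<^sub>R Ts n (xs n)))\<^sup>2)
      \<le> (onorm T)\<^sup>2 * rad_exp m (\<lambda>es. (norm (\<Sum>n<m. (es ! n) *\<^sub>R xs n))\<^sup>2)"
    unfolding rad_exp_cmult[symmetric]
    by (intro rad_exp_mono) (simp add: power_mult_distrib[symmetric] power_mono onorm[OF assms])
qed

lemma R_bound_for_prod:
  fixes J :: "('a::cplx_normed_vector \<Rightarrow> 'b::cplx_normed_vector \<times> 'c::cplx_normed_vector) set"
  assumes J1: "R_bound_for Ms {(\<lambda>x. fst (T x)) | T. T \<in> J} K1"
    and J2: "R_bound_for Ms {(\<lambda>x. snd (T x)) | T. T \<in> J} K2"
  shows "R_bound_for Ms J (sqrt (K1\<^sup>2 + K2\<^sup>2))"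
  unfolding R_bound_for_def
proof (intro ballI allI impI)
  fix m :: nat and Ts and xs :: "nat \<Rightarrow> 'a"
  assume m: "m \<in> Ms" and Ts: "\<forall>n<m. Ts n \<in> J"
  define E where "E = rad_exp m (\<lambda>es. (norm (\<Sum>n<m. (es ! n) *\<^sub>R xs n))\<^sup>2)"
  have "rad_exp m (\<lambda>es. (norm (\<Sum>n<m. (es ! n) *\<^sub>R (\<lambda>x. fst (Ts n x)) (xs n)))\<^sup>2) \<le> K1\<^sup>2 * E"
    using R_bound_forD[OF J1 m, of "\<lambda>n x. fst (Ts n x)" xs] Ts unfolding E_def by blast
  moreover have "rad_exp m (\<lambda>es. (norm (\<Sum>n<m. (es ! n) *\<^sub>R (\<lambda>x. snd (Ts n x)) (xs n)))\<^sup>2) \<le> K2\<^sup>2 * E"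
    using R_bound_forD[OF J2 m, of "\<lambda>n x. snd (Ts n x)" xs] Ts unfolding E_def by blast
  moreover have "(norm (\<Sum>n<m. (es ! n) *\<^sub>R Ts n (xs n)))\<^sup>2 =
     (norm (\<Sum>n<m. (es ! n) *\<^sub>R (\<lambda>x. fst (Ts n x)) (xs n)))\<^sup>2
     + (norm (\<Sum>n<m. (es ! n) *\<^sub>R (\<lambda>x. snd (Ts n x)) (xs n)))\<^sup>2" for es
    by (simp add: norm_prod_def fst_sum snd_sum)
  ultimately show "rad_exp m (\<lambda>es. (norm (\<Sum>n<m. (es ! n) *\<^sub>R Ts n (xs n)))\<^sup>2)
      \<le> (sqrt (K1\<^sup>2 + K2\<^sup>2))\<^sup>2 * E"
    by (simp only: rad_exp_add) (simp add: algebra_simps)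
qed

lemma R_bounded_for_compose:
  assumes "R_bounded_for Ms {f z | z. z \<in> Z}" "R_bounded_for Ms {g z | z. z \<in> Z}"
  shows "R_bounded_for Ms {(\<lambda>x. f z (g z x)) | z. z \<in> Z}"
proof -
  obtain K1 K2 where "R_bound_for Ms {f z | z. z \<in> Z} K1" "R_bound_for Ms {g z | z. z \<in> Z} K2"
    using assms unfolding R_bounded_for_def by blast
  from R_bound_for_compose[OF this] show ?thesis
    unfolding R_bounded_for_def by (blast intro: R_bound_for_mono[OF _ order_refl])
qed

lemma R_bounded_for_add:
  assumes "R_bounded_for Ms {f z | z. z \<in> Z}" "R_bounded_for Ms {g z | z. z \<in> Z}"
  shows "R_bounded_for Ms {(\<lambda>x. f z x + g z x) | z. z \<in> Z}"
proof -
  obtain K1 K2 where "R_bound_for Ms {f z | z. z \<in> Z} K1" "R_bound_for Ms {g z | z. z \<in> Z} K2"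
    using assms unfolding R_bounded_for_def by blast
  from R_bound_for_add[OF this] show ?thesis
    unfolding R_bounded_for_def by (blast intro: R_bound_for_mono[OF _ order_refl])
qed

lemma R_bounded_for_const: "bounded_linear T \<Longrightarrow> R_bounded_for Ms {T | z. z \<in> Z}"
  unfolding R_bounded_for_def
  by (blast intro: R_bound_for_mono[OF R_bound_for_singleton order_refl])

lemma R_bounded_for_diff:
  assumes "R_bounded_for Ms {f z | z. z \<in> Z}" "R_bounded_for Ms {g z | z. z \<in> Z}"
  shows "R_bounded_for Ms {(\<lambda>x. f z x - g z x) | z. z \<in> Z}"
proof -
  have "R_bounded_for Ms {(\<lambda>x. - g z x) | z. z \<in> Z}"
    using R_bounded_for_compose[OF
        R_bounded_for_const[OF bounded_linear_minus[OF bounded_linear_ident]]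
        assms(2)] by simp
  from R_bounded_for_add[OF assms(1) this] show ?thesis by simp
qed

lemma R_bounded_for_Pair:
  assumes "R_bounded_for Ms {f z | z. z \<in> Z}" "R_bounded_for Ms {g z | z. z \<in> Z}"
  shows "R_bounded_for Ms {(\<lambda>x. (f z x, g z x)) | z. z \<in> Z}"
proof -
  obtain K1 K2 where "R_bound_for Ms {f z | z. z \<in> Z} K1" "R_bound_for Ms {g z | z. z \<in> Z} K2"
    using assms unfolding R_bounded_for_def by blast
  then have "R_bound_for Ms {(\<lambda>x. fst (T x)) | T. T \<in> {(\<lambda>x. (f z x, g z x)) | z. z \<in> Z}} K1"
     "R_bound_for Ms {(\<lambda>x. snd (T x)) | T. T \<in> {(\<lambda>x. (f z x, g z x)) | z. z \<in> Z}} K2"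
    by (auto elim!: R_bound_for_mono)
  from R_bound_for_prod[OF this] show ?thesis unfolding R_bounded_for_def by blast
qed

lemma R_bounded_for_cong:
  assumes "R_bounded_for Ms {f z | z. z \<in> Z}" "\<And>z x. z \<in> Z \<Longrightarrow> g z x = f z x"
  shows "R_bounded_for Ms {g z | z. z \<in> Z}"
proof -
  have "{g z | z. z \<in> Z} \<subseteq> {f z | z. z \<in> Z}" using assms(2) by (auto intro!: ext)
  then show ?thesis using R_bounded_for_mono[OF assms(1)] by blast
qed

section \<open>Sectorial operators\<close>

lemma csector_antimono: "\<omega> \<le> \<phi> \<Longrightarrow> csector \<phi> \<subseteq> csector \<omega>"
  unfolding csector_def sector_def by (intro Compl_anti_mono closure_mono) auto

lemma sectorial_with_mono:
  assumes "sectorial_with S T \<omega>" "\<omega> \<le> \<phi>" "\<phi> < pi"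
  shows "sectorial_with S T \<phi>"
proof -
  have "closure (sector \<omega>) \<subseteq> closure (sector \<phi>)"
    using assms(2) unfolding sector_def by (intro closure_mono) auto
  moreover obtain K where "\<forall>z\<in>csector \<omega>. onorm (\<lambda>y. z *\<^sub>C resolvent S T z y) \<le> K"
    using assms(1) unfolding sectorial_with_def by blast
  ultimately show ?thesis
    using assms csector_antimono[OF assms(2)] unfolding sectorial_with_def by force
qed

lemma sect_angle_nonneg:
  assumes "sectorial S T"
  shows "0 \<le> sect_angle S T"
  unfolding sect_angle_def
proof (rule cInf_greatest)
  show "{\<omega>. sectorial_with S T \<omega>} \<noteq> {}" using assms unfolding sectorial_def by blast
qed (simp add: sectorial_with_def)

lemma sectorial_with_above_sect_angle:
  assumes "sectorial S T" "sect_angle S T < \<phi>" "\<phi> < pi"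
  shows "sectorial_with S T \<phi>"
proof -
  obtain \<omega> where "sectorial_with S T \<omega>" "\<omega> < \<phi>"
    using cInf_lessD[of "{\<omega>. sectorial_with S T \<omega>}" \<phi>] assms
    unfolding sectorial_def sect_angle_def by auto
  then show ?thesis using sectorial_with_mono assms(3) by force
qed

lemma R_angle_nonneg: "R_sectorial S T \<Longrightarrow> 0 \<le> R_angle S T"
  unfolding R_angle_def R_sectorial_def
  by (rule cInf_greatest) (auto simp: R_sectorial_with_def dest!: sect_angle_nonneg)

definition resolvent_bounded_outside ::
    "nat set \<Rightarrow> 'a::cplx_normed_vector set \<Rightarrow> ('a \<Rightarrow> 'a) \<Rightarrow> real \<Rightarrow> bool" where
  "resolvent_bounded_outside Ms S T \<psi> \<longleftrightarrow> (\<forall>\<phi>. \<psi> < \<phi> \<and> \<phi> < pi \<longrightarrow>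
     csector \<phi> \<subseteq> resolvent_set S T
     \<and> R_bounded_for Ms {(\<lambda>y. z *\<^sub>C resolvent S T z y) | z. z \<in> csector \<phi>})"

lemma resolvent_bounded_outside_mono:
  "resolvent_bounded_outside Ms S T \<psi> \<Longrightarrow> Ms' \<subseteq> Ms \<Longrightarrow> resolvent_bounded_outside Ms' S T \<psi>"
  unfolding resolvent_bounded_outside_def by (blast intro: R_bounded_for_mono)

lemma in_resolvent_set_outside_sector:
  assumes "resolvent_bounded_outside Ms S T \<psi>" "\<psi> < \<phi>" "\<phi> < pi" "bdd_invertible S T"
    and "z \<in> csector \<phi> \<union> {0}"
  shows "z \<in> resolvent_set S T"
  using assms zero_in_resolvent_set_iff unfolding resolvent_bounded_outside_def by blast

lemma sectorial_imp_resolvent_bounded_outside: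
  assumes "sectorial S T" "sect_angle S T \<le> \<psi>"
  shows "resolvent_bounded_outside {1} S T \<psi>"
  unfolding resolvent_bounded_outside_def
proof (intro allI impI conjI)
  fix \<phi> assume \<phi>: "\<psi> < \<phi> \<and> \<phi> < pi"
  then have sw: "sectorial_with S T \<phi>"
    using assms by (intro sectorial_with_above_sect_angle) auto
  then show res: "csector \<phi> \<subseteq> resolvent_set S T"
    unfolding sectorial_with_def csector_def spectrum_op_def by blast
  have "bdd_op (\<lambda>y. z *\<^sub>C resolvent S T z y)" if "z \<in> csector \<phi>" for z
    using that res by (blast intro: bdd_op_compose[OF bdd_op_scaleC resolventD(1)])
  with sw show "R_bounded_for {1} {(\<lambda>y. z *\<^sub>C resolvent S T z y) | z. z \<in> csector \<phi>}"
    unfolding sectorial_with_def by (subst R_bounded_for_one_iff_onorm) blast+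
qed

lemma resolvent_bounded_outside_imp_sectorial:
  assumes T: "lin_op S T" "closure S = UNIV" "closure (T ` S) = UNIV"
    and \<psi>: "0 \<le> \<psi>" "\<psi> < pi" and res: "resolvent_bounded_outside {1} S T \<psi>"
  shows "sectorial S T \<and> sect_angle S T \<le> \<psi>"
proof -
  have sw: "sectorial_with S T \<phi>" if \<phi>: "\<psi> < \<phi>" "\<phi> < pi" for \<phi>
  proof -
    have sub: "csector \<phi> \<subseteq> resolvent_set S T"
      and bd: "R_bounded_for {1} {(\<lambda>y. z *\<^sub>C resolvent S T z y) | z. z \<in> csector \<phi>}"
      using res \<phi> unfolding resolvent_bounded_outside_def by blast+
    have "bdd_op (\<lambda>y. z *\<^sub>C resolvent S T z y)" if "z \<in> csector \<phi>" for z
      using that sub by (blast intro: bdd_op_compose[OF bdd_op_scaleC resolventD(1)])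
    with bd have "\<exists>K. \<forall>z\<in>csector \<phi>. onorm (\<lambda>y. z *\<^sub>C resolvent S T z y) \<le> K"
      by (subst (asm) R_bounded_for_one_iff_onorm) blast+
    moreover have "spectrum_op S T \<subseteq> closure (sector \<phi>)"
      using sub unfolding spectrum_op_def csector_def by blast
    ultimately show ?thesis
      using T \<psi> \<phi> unfolding sectorial_with_def by auto
  qed
  have "\<psi> < (\<psi> + pi) / 2" "(\<psi> + pi) / 2 < pi" using \<psi> by auto
  then have "sectorial S T" unfolding sectorial_def using sw by blast
  moreover have "sect_angle S T \<le> \<psi>"
    unfolding sect_angle_def
  proof (rule dense_ge_bounded[OF \<psi>(2)])
    fix \<phi> assume "\<psi> < \<phi>" "\<phi> < pi"
    then show "Inf {\<omega>. sectorial_with S T \<omega>} \<le> \<phi>"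
      using sw
      by (intro cInf_lower) (auto simp: sectorial_with_def bdd_below_def intro!: exI[of _ 0])
  qed
  ultimately show ?thesis ..
qed

lemma R_sectorial_imp_resolvent_bounded_outside:
  assumes "R_sectorial S T" "R_angle S T \<le> \<psi>"
  shows "resolvent_bounded_outside UNIV S T \<psi>"
  unfolding resolvent_bounded_outside_def
proof (intro allI impI conjI)
  fix \<phi> assume \<phi>: "\<psi> < \<phi> \<and> \<phi> < pi"
  obtain \<sigma> where \<sigma>: "\<sigma> < \<phi>" "R_sectorial_with S T \<sigma>"
    using cInf_lessD[of "{\<sigma>. R_sectorial_with S T \<sigma>}" \<phi>] assms \<phi>
    unfolding R_sectorial_def R_angle_def by auto
  then have "sectorial_with S T \<phi>"
    using \<phi> unfolding R_sectorial_with_def by (auto intro: sectorial_with_above_sect_angle)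
  then show "csector \<phi> \<subseteq> resolvent_set S T"
    unfolding sectorial_with_def csector_def spectrum_op_def by blast
  have "R_bounded {(\<lambda>y. z *\<^sub>C resolvent S T z y) | z. z \<in> csector \<sigma>}"
    using \<sigma>(2) unfolding R_sectorial_with_def by blast
  then show "R_bounded_for UNIV {(\<lambda>y. z *\<^sub>C resolvent S T z y) | z. z \<in> csector \<phi>}"
    unfolding R_bounded_for_UNIV[symmetric]
    by (rule R_bounded_for_mono) (use csector_antimono[of \<sigma> \<phi>] \<sigma>(1) in auto)
qed

lemma resolvent_bounded_outside_imp_R_sectorial:
  assumes T: "lin_op S T" "closure S = UNIV" "closure (T ` S) = UNIV"
    and \<psi>: "0 \<le> \<psi>" "\<psi> < pi" and res: "resolvent_bounded_outside UNIV S T \<psi>"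
  shows "R_sectorial S T \<and> R_angle S T \<le> \<psi>"
proof -
  have "sectorial S T \<and> sect_angle S T \<le> \<psi>"
    using resolvent_bounded_outside_mono[OF res]
    by (intro resolvent_bounded_outside_imp_sectorial[OF T \<psi>]) auto
  then have rw: "R_sectorial_with S T \<sigma>" if "\<psi> < \<sigma>" "\<sigma> < pi" for \<sigma>
    using res that
    unfolding resolvent_bounded_outside_def R_sectorial_with_def R_bounded_for_UNIV by auto
  have "\<psi> < (\<psi> + pi) / 2" "(\<psi> + pi) / 2 < pi" using \<psi> by auto
  then have "R_sectorial S T" unfolding R_sectorial_def using rw by blast
  moreover have "R_angle S T \<le> \<psi>"
    unfolding R_angle_def
  proof (rule dense_ge_bounded[OF \<psi>(2)])
    fix \<sigma> assume "\<psi> < \<sigma>" "\<sigma> < pi"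
    then show "Inf {\<sigma>. R_sectorial_with S T \<sigma>} \<le> \<sigma>"
      using rw by (intro cInf_lower) (auto simp: R_sectorial_with_def bdd_below_def
          intro!: exI[of _ "sect_angle S T"])
  qed
  ultimately show ?thesis ..
qed

definition inverse_bounded_outside ::
    "nat set \<Rightarrow> (complex \<Rightarrow> 'a::cplx_normed_vector \<Rightarrow> 'a) \<Rightarrow> real \<Rightarrow> bool"
  where "inverse_bounded_outside Ms M \<psi> \<longleftrightarrow> (\<forall>\<phi>. \<psi> < \<phi> \<and> \<phi> < pi \<longrightarrow>
     (\<forall>z\<in>csector \<phi> \<union> {0}. bdd_invertible UNIV (M z))
     \<and> R_bounded_for Ms {inv (M z) | z. z \<in> csector \<phi>})"

lemma inverse_bounded_outside_one_iff:
  "inverse_bounded_outside {1} M \<psi> \<longleftrightarrow> (\<forall>\<phi>. \<psi> < \<phi> \<and> \<phi> < pi \<longrightarrow>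
     (\<forall>z\<in>csector \<phi> \<union> {0}. bdd_invertible UNIV (M z))
     \<and> (\<exists>K. \<forall>z\<in>csector \<phi>. onorm (inv (M z)) \<le> K))"
proof -
  have "R_bounded_for {1} {inv (M z) | z. z \<in> csector \<phi>}
      \<longleftrightarrow> (\<exists>K. \<forall>z\<in>csector \<phi>. onorm (inv (M z)) \<le> K)"
    if "\<forall>z\<in>csector \<phi> \<union> {0}. bdd_invertible UNIV (M z)" for \<phi>
    using that by (intro R_bounded_for_one_iff_onorm) (auto dest: bdd_invertibleD(1))
  then show ?thesis unfolding inverse_bounded_outside_def by blast
qed

lemma inverse_bounded_outside_UNIV_iff:
  "inverse_bounded_outside UNIV M \<psi> \<longleftrightarrow> (\<forall>\<phi>. \<psi> < \<phi> \<and> \<phi> < pi \<longrightarrow>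
     (\<forall>z\<in>csector \<phi> \<union> {0}. bdd_invertible UNIV (M z))
     \<and> R_bounded {inv (M z) | z. z \<in> csector \<phi>})"
  by (simp add: inverse_bounded_outside_def R_bounded_for_UNIV)

section \<open>Block operator matrices\<close>

definition relatively_bounded :: "'a::real_normed_vector set \<Rightarrow> ('a \<Rightarrow> 'c::real_normed_vector)
    \<Rightarrow> 'a set \<Rightarrow> ('a \<Rightarrow> 'b::real_normed_vector) \<Rightarrow> bool" where
  "relatively_bounded S T SE E \<longleftrightarrow> S \<subseteq> SE
     \<and> (\<exists>c L. \<forall>x\<in>S. norm (E x) \<le> c * norm (T x) + L * norm x)"

lemma bdd_op_relatively_bounded_comp_inverse:
  assumes T: "bdd_invertible S T" and E: "lin_op SE E" "relatively_bounded S T SE E"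
  shows "bdd_op (\<lambda>u. E (inv_into S T u))"
proof -
  note Tinv = bdd_invertibleD[OF T]
  obtain c L where rel: "\<And>x. x \<in> S \<Longrightarrow> norm (E x) \<le> c * norm (T x) + L * norm x" and "S \<subseteq> SE"
    using E(2) unfolding relatively_bounded_def by blast
  obtain K where K: "\<And>u. norm (inv_into S T u) \<le> K * norm u"
    using Tinv(1) unfolding bdd_op_def by blast
  have "norm (E (inv_into S T u)) \<le> (c + \<bar>L\<bar> * K) * norm u" for u
  proof -
    have "norm (E (inv_into S T u)) \<le> c * norm u + L * norm (inv_into S T u)"
      using rel[OF Tinv(2)] Tinv(3) by simp
    also have "\<dots> \<le> c * norm u + \<bar>L\<bar> * (K * norm u)"
      using order_trans[OF mult_right_mono[OF abs_ge_self norm_ge_zero]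
          mult_left_mono[OF K abs_ge_zero]]
      by simp
    finally show ?thesis by (simp add: algebra_simps)
  qed
  moreover have "inv_into S T u \<in> SE" for u using Tinv(2) \<open>S \<subseteq> SE\<close> by blast
  then have "lin_op UNIV (\<lambda>u. E (inv_into S T u))"
    using Tinv(1) E(1) by (simp add: lin_op_def bdd_op_iff)
  ultimately show ?thesis unfolding bdd_op_def by blast
qed

lemma bdd_op_relatively_bounded_comp_resolvent:
  assumes T: "bdd_invertible S T" and E: "lin_op SE E" "relatively_bounded S T SE E"
    and z: "z \<in> resolvent_set S T"
  shows "bdd_op (\<lambda>v. E (resolvent S T z v))"
proof -
  have "bdd_op (\<lambda>v. E (inv_into S T (z *\<^sub>C resolvent S T z v - v)))"
    by (rule bdd_op_compose[OF bdd_op_relatively_bounded_comp_inverse[OF T E]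
          bdd_op_diff[OF bdd_op_compose[OF bdd_op_scaleC resolventD(1)[OF z]] bdd_op_ident]])
  then show ?thesis by (simp add: inv_into_resolvent_eq[OF z T])
qed

lemma R_bounded_for_relatively_bounded_comp_resolvent:
  assumes T: "bdd_invertible S T" and E: "lin_op SE E" "relatively_bounded S T SE E"
    and Z: "Z \<subseteq> resolvent_set S T"
    and bd: "R_bounded_for Ms {(\<lambda>v. z *\<^sub>C resolvent S T z v) | z. z \<in> Z}"
  shows "R_bounded_for Ms {(\<lambda>v. E (resolvent S T z v)) | z. z \<in> Z}"
proof (rule R_bounded_for_cong)
  show "R_bounded_for Ms {(\<lambda>v. E (inv_into S T (z *\<^sub>C resolvent S T z v - v))) | z. z \<in> Z}"
    by (rule R_bounded_for_compose[OF
          R_bounded_for_const[OF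
            bdd_op_bounded_linear[OF bdd_op_relatively_bounded_comp_inverse[OF T E]]]
          R_bounded_for_diff[OF bd R_bounded_for_const[OF bounded_linear_ident]]])
  show "E (resolvent S T z v) = E (inv_into S T (z *\<^sub>C resolvent S T z v - v))" if "z \<in> Z" for z v
    using inv_into_resolvent_eq[OF subsetD[OF Z that] T] by simp
qed

locale block_operator_matrix =
  fixes SA :: "'a::{cplx_normed_vector, banach} set" and A :: "'a \<Rightarrow> 'a"
    and SD :: "'b::{cplx_normed_vector, banach} set" and D :: "'b \<Rightarrow> 'b"
    and SB :: "'b set" and B :: "'b \<Rightarrow> 'a"
    and SC :: "'a set" and C :: "'a \<Rightarrow> 'b"
  assumes A_lin: "lin_op SA A" and D_lin: "lin_op SD D"
    and A_dense: "closure SA = UNIV" and D_dense: "closure SD = UNIV"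
    and B_lin: "lin_op SB B" and C_lin: "lin_op SC C"
    and B_rel: "relatively_bounded SD D SB B" and C_rel: "relatively_bounded SA A SC C"
    and A_inv: "bdd_invertible SA A" and D_inv: "bdd_invertible SD D"
begin

abbreviation \<A> :: "'a \<times> 'b \<Rightarrow> 'a \<times> 'b" where "\<A> \<equiv> block_op A B C D"
abbreviation "M\<^sub>1 \<equiv> M1 SA A B C SD D"
abbreviation "M\<^sub>2 \<equiv> M2 SA A B C SD D"

definition BR :: "complex \<Rightarrow> 'b \<Rightarrow> 'a" where "BR z v = B (resolvent SD D z v)"
definition CR :: "complex \<Rightarrow> 'a \<Rightarrow> 'b" where "CR z u = C (resolvent SA A z u)"

lemma M1_eq: "M\<^sub>1 z = (\<lambda>x. x - BR z (CR z x))"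
  unfolding M1_def BR_def CR_def ..

lemma M2_eq: "M\<^sub>2 z = (\<lambda>y. y - CR z (BR z y))"
  unfolding M2_def BR_def CR_def ..

lemma zero_in_resolvent_set: "0 \<in> resolvent_set SA A" "0 \<in> resolvent_set SD D"
  by (simp_all add: zero_in_resolvent_set_iff A_inv D_inv)

lemma bdd_op_BR: "z \<in> resolvent_set SD D \<Longrightarrow> bdd_op (BR z)"
  unfolding BR_def by (rule bdd_op_relatively_bounded_comp_resolvent[OF D_inv B_lin B_rel])

lemma bdd_op_CR: "z \<in> resolvent_set SA A \<Longrightarrow> bdd_op (CR z)"
  unfolding CR_def by (rule bdd_op_relatively_bounded_comp_resolvent[OF A_inv C_lin C_rel])

lemma lin_op_BR: "z \<in> resolvent_set SD D \<Longrightarrow> lin_op UNIV (BR z)"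
  using bdd_op_BR by (simp add: bdd_op_iff)

lemma R_bounded_for_BR:
  "Z \<subseteq> resolvent_set SD D \<Longrightarrow> R_bounded_for Ms {(\<lambda>v. z *\<^sub>C resolvent SD D z v) | z. z \<in> Z}
    \<Longrightarrow> R_bounded_for Ms {BR z | z. z \<in> Z}"
  unfolding BR_def[abs_def]
  by (rule R_bounded_for_relatively_bounded_comp_resolvent[OF D_inv B_lin B_rel])

lemma R_bounded_for_CR:
  "Z \<subseteq> resolvent_set SA A \<Longrightarrow> R_bounded_for Ms {(\<lambda>u. z *\<^sub>C resolvent SA A z u) | z. z \<in> Z}
    \<Longrightarrow> R_bounded_for Ms {CR z | z. z \<in> Z}"
  unfolding CR_def[abs_def]
  by (rule R_bounded_for_relatively_bounded_comp_resolvent[OF A_inv C_lin C_rel])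

lemma block_op_Pair: "\<A> (x, y) = (A x + B y, C x + D y)"
  by (simp add: block_op_def)

lemma lin_op_block: "lin_op (SA \<times> SD) \<A>"
proof -
  have "SA \<subseteq> SC" "SD \<subseteq> SB"
    using B_rel C_rel by (simp_all add: relatively_bounded_def)
  then show ?thesis
    using A_lin D_lin B_lin C_lin
    by (auto simp: lin_op_def block_op_def csubspace_Times scaleC_Pair scaleC_add_right subsetD)
qed

text \<open>The inverse of \<open>z - \<A>\<close> read off from its factorisation through
  \<open>M\<^sub>1 z (z - A)\<close>, the Schur complement of \<open>z - D\<close> in \<open>z - \<A>\<close>.\<close>

definition block_resolvent :: "complex \<Rightarrow> 'a \<times> 'b \<Rightarrow> 'a \<times> 'b" where
  "block_resolvent z p = (let w = inv (M\<^sub>1 z) (fst p + BR z (snd p))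
     in (resolvent SA A z w, resolvent SD D z (snd p + CR z w)))"

lemma block_resolvent_right_inverse:
  assumes zA: "z \<in> resolvent_set SA A" and zD: "z \<in> resolvent_set SD D"
    and M: "bdd_invertible UNIV (M\<^sub>1 z)"
  shows "z *\<^sub>C block_resolvent z p - \<A> (block_resolvent z p) = p"
proof (cases p)
  case (Pair u v)
  define w where "w = inv (M\<^sub>1 z) (u + BR z v)"
  define x where "x = resolvent SA A z w"
  define y where "y = resolvent SD D z (v + CR z w)"
  have Ax: "A x = z *\<^sub>C x - w"
    using resolventD(3)[OF zA, of w] unfolding x_def by (simp add: algebra_simps)
  have Dy: "D y = z *\<^sub>C y - (v + C x)"
    using resolventD(3)[OF zD, of "v + CR z w"]
    unfolding y_def x_def CR_def by (simp add: algebra_simps)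
  have "B y = BR z v + BR z (CR z w)"
    unfolding y_def BR_def[symmetric] by (rule lin_op_add[OF lin_op_BR[OF zD] UNIV_I UNIV_I])
  moreover have "w - BR z (CR z w) = u + BR z v"
    using bdd_invertibleD(3)[OF M] unfolding w_def M1_eq by simp
  ultimately have By: "B y = w - u" by (simp add: algebra_simps)
  have "block_resolvent z p = (x, y)"
    by (simp add: block_resolvent_def Let_def Pair w_def x_def y_def)
  then show ?thesis
    by (simp add: Pair block_op_Pair scaleC_Pair Ax Dy By)
qed

lemma block_resolvent_left_inverse:
  assumes zA: "z \<in> resolvent_set SA A" and zD: "z \<in> resolvent_set SD D"
    and M: "bdd_invertible UNIV (M\<^sub>1 z)" and p: "p \<in> SA \<times> SD"
  shows "block_resolvent z (z *\<^sub>C p - \<A> p) = p"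
proof (cases p)
  case (Pair x y)
  with p have x: "x \<in> SA" and y: "y \<in> SD" by auto
  define u where "u = z *\<^sub>C x - (A x + B y)"
  define v where "v = z *\<^sub>C y - (C x + D y)"
  define w where "w = z *\<^sub>C x - A x"
  have RAw: "resolvent SA A z w = x" unfolding w_def by (rule resolventD(4)[OF zA x])
  then have CRw: "CR z w = C x" by (simp add: CR_def)
  have RDy: "resolvent SD D z (v + C x) = y"
    using resolventD(4)[OF zD y] by (simp add: v_def algebra_simps)
  have "B y = BR z v + BR z (C x)"
    using lin_op_add[OF lin_op_BR[OF zD] UNIV_I UNIV_I, of v "C x"] by (simp add: BR_def RDy)
  moreover have "u = w - B y" by (simp add: u_def w_def algebra_simps)
  ultimately have "u + BR z v = M\<^sub>1 z w" by (simp add: M1_eq CRw)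
  then have "inv (M\<^sub>1 z) (u + BR z v) = w"
    using bdd_invertibleD(4)[OF M UNIV_I] by simp
  then show ?thesis
    by (simp add: Pair block_op_Pair scaleC_Pair block_resolvent_def RAw CRw RDy
        flip: u_def v_def)
qed

lemma resolvent_block:
  assumes zA: "z \<in> resolvent_set SA A" and zD: "z \<in> resolvent_set SD D"
    and M: "bdd_invertible UNIV (M\<^sub>1 z)"
  shows "z \<in> resolvent_set (SA \<times> SD) \<A>" and "resolvent (SA \<times> SD) \<A> z = block_resolvent z"
proof -
  let ?N = "inv (M\<^sub>1 z)"
  have "bdd_op (\<lambda>p. ?N (fst p + BR z (snd p)))"
    by (intro bdd_op_compose[OF bdd_invertibleD(1)[OF M]] bdd_op_add bdd_op_fst
        bdd_op_compose[OF bdd_op_BR[OF zD] bdd_op_snd])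
  then have "bdd_op (block_resolvent z)"
    unfolding block_resolvent_def Let_def
    by (intro bdd_op_Pair bdd_op_compose[OF resolventD(1)[OF zA]]
        bdd_op_compose[OF resolventD(1)[OF zD]]
        bdd_op_add bdd_op_snd bdd_op_compose[OF bdd_op_CR[OF zA]])
  moreover have "block_resolvent z p \<in> SA \<times> SD" for p
    using resolventD(2)[OF zA] resolventD(2)[OF zD] by (simp add: block_resolvent_def Let_def)
  ultimately show "z \<in> resolvent_set (SA \<times> SD) \<A>" "resolvent (SA \<times> SD) \<A> z = block_resolvent z"
    using resolvent_setI[of "block_resolvent z" "SA \<times> SD" z \<A>]
      block_resolvent_right_inverse[OF zA zD M] block_resolvent_left_inverse[OF zA zD M] by auto
qed

lemma M1_block_resolvent_right_inverse:
  fixes u :: 'a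
  assumes zA: "z \<in> resolvent_set SA A" and zD: "z \<in> resolvent_set SD D"
    and zB: "z \<in> resolvent_set (SA \<times> SD) \<A>"
  defines "x \<equiv> fst (resolvent (SA \<times> SD) \<A> z (u, 0))"
  shows "M\<^sub>1 z (z *\<^sub>C x - A x) = u"
proof -
  obtain y where xy: "resolvent (SA \<times> SD) \<A> z (u, 0) = (x, y)"
    unfolding x_def by (metis prod.collapse)
  have x: "x \<in> SA" and y: "y \<in> SD"
    using resolventD(2)[OF zB, of "(u, 0)"] xy by auto
  have u: "z *\<^sub>C x - (A x + B y) = u" and "z *\<^sub>C y - (C x + D y) = 0"
    using resolventD(3)[OF zB, of "(u, 0)"] xy by (simp_all add: block_op_Pair scaleC_Pair)
  then have "resolvent SD D z (C x) = y"
    using resolventD(4)[OF zD y] by (simp add: algebra_simps)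
  moreover have "resolvent SA A z (z *\<^sub>C x - A x) = x"
    by (rule resolventD(4)[OF zA x])
  ultimately have "BR z (CR z (z *\<^sub>C x - A x)) = B y"
    by (simp add: BR_def CR_def)
  with u show ?thesis by (simp add: M1_eq algebra_simps)
qed

lemma M1_block_resolvent_left_inverse:
  fixes w :: 'a
  assumes zA: "z \<in> resolvent_set SA A" and zD: "z \<in> resolvent_set SD D"
    and zB: "z \<in> resolvent_set (SA \<times> SD) \<A>"
  defines "x \<equiv> fst (resolvent (SA \<times> SD) \<A> z (M\<^sub>1 z w, 0))"
  shows "z *\<^sub>C x - A x = w"
proof -
  define x' where "x' = resolvent SA A z w"
  define y' where "y' = resolvent SD D z (C x')"
  have x': "x' \<in> SA" and y': "y' \<in> SD"
    unfolding x'_def y'_def using resolventD(2)[OF zA] resolventD(2)[OF zD] by auto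
  have Ax': "z *\<^sub>C x' - A x' = w" unfolding x'_def by (rule resolventD(3)[OF zA])
  have Dy': "z *\<^sub>C y' - D y' = C x'" unfolding y'_def by (rule resolventD(3)[OF zD])
  have "B y' = BR z (CR z w)" by (simp add: BR_def CR_def x'_def y'_def)
  then have "z *\<^sub>C (x', y') - \<A> (x', y') = (M\<^sub>1 z w, 0)"
    using Ax' Dy' by (simp add: block_op_Pair scaleC_Pair M1_eq algebra_simps)
  then have "x = x'"
    using resolventD(4)[OF zB, of "(x', y')"] x' y' by (simp add: x_def)
  with Ax' show ?thesis by simp
qed

lemma M1_inverse_via_block_resolvent:
  assumes zA: "z \<in> resolvent_set SA A" and zD: "z \<in> resolvent_set SD D"
    and zB: "z \<in> resolvent_set (SA \<times> SD) \<A>"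
  defines "R \<equiv> resolvent (SA \<times> SD) \<A> z"
  shows "bij (M\<^sub>1 z)" and "inv (M\<^sub>1 z) u = z *\<^sub>C fst (R (u, 0)) - A (fst (R (u, 0)))"
proof -
  let ?N = "\<lambda>u. z *\<^sub>C fst (R (u, 0)) - A (fst (R (u, 0)))"
  have right: "M\<^sub>1 z (?N u) = u" for u
    unfolding R_def by (rule M1_block_resolvent_right_inverse[OF zA zD zB])
  have left: "?N (M\<^sub>1 z w) = w" for w
    unfolding R_def by (rule M1_block_resolvent_left_inverse[OF zA zD zB])
  show bij: "bij (M\<^sub>1 z)" by (rule bij_betw_byWitness[where f' = ?N]) (use left right in auto)
  show "inv (M\<^sub>1 z) u = ?N u"
    by (rule inv_f_eq[OF bij_is_inj[OF bij] right])
qed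

text \<open>Since \<open>\<A> (x, y) = G (A x, D y)\<close> for the bounded operator
  \<open>G (a, d) = (a + B D\<^sup>-\<^sup>1 d, C A\<^sup>-\<^sup>1 a + d)\<close>, invertibility of \<open>\<A>\<close> makes \<open>G\<close> bijective; the
  bounded inverse theorem then bounds \<open>A x\<close> by \<open>\<A> (x, y)\<close>.\<close>

lemma A_fst_bounded_by_block:
  assumes inv: "bdd_invertible (SA \<times> SD) \<A>"
  obtains T where "bdd_op T" "\<And>p. p \<in> SA \<times> SD \<Longrightarrow> A (fst p) = T (\<A> p)"
proof -
  let ?Ai = "inv_into SA A" and ?Di = "inv_into SD D" and ?I = "inv_into (SA \<times> SD) \<A>"
  note I = bdd_invertibleD[OF inv]
    and Ai = bdd_invertibleD[OF A_inv] and Di = bdd_invertibleD[OF D_inv]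
  define G where "G q = (fst q + B (?Di (snd q)), C (?Ai (fst q)) + snd q)" for q :: "'a \<times> 'b"
  have "bdd_op G"
    unfolding G_def
    by (intro bdd_op_Pair bdd_op_add bdd_op_fst bdd_op_snd
        bdd_op_compose[OF bdd_op_relatively_bounded_comp_inverse[OF D_inv B_lin B_rel]]
        bdd_op_compose[OF bdd_op_relatively_bounded_comp_inverse[OF A_inv C_lin C_rel]])
  have G_block: "G (A x, D y) = \<A> (x, y)" if "x \<in> SA" "y \<in> SD" for x y
    using that by (simp add: G_def block_op_Pair Ai(4) Di(4))
  define H where "H u = (A (fst (?I u)), D (snd (?I u)))" for u
  have GH: "G (H u) = u" for u
    using G_block[of "fst (?I u)" "snd (?I u)"] I(2,3)[of u] by (auto simp: H_def mem_Times_iff)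
  have HG: "H (G q) = q" for q
  proof -
    have "G q = \<A> (?Ai (fst q), ?Di (snd q))"
      using G_block[OF Ai(2) Di(2)] by (cases q) (simp add: Ai(3) Di(3))
    then show ?thesis
      using I(4)[of "(?Ai (fst q), ?Di (snd q))"] Ai(2,3) Di(2,3) by (simp add: H_def)
  qed
  have "bij G" by (rule bij_betw_byWitness[where f' = H]) (use GH HG in auto)
  moreover have "inv G = H" by (rule ext, rule inv_f_eq) (use \<open>bij G\<close> GH in \<open>auto simp: bij_is_inj\<close>)
  ultimately have "bdd_op H" using bdd_op_inv[OF \<open>bdd_op G\<close>] by simp
  then have "bdd_op (\<lambda>u. fst (H u))" by (rule bdd_op_compose[OF bdd_op_fst])
  moreover have "A (fst p) = fst (H (\<A> p))" if "p \<in> SA \<times> SD" for p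
    using I(4)[OF that] by (simp add: H_def)
  ultimately show thesis by (rule that)
qed

lemma M1_bdd_invertible_via_block:
  assumes zA: "z \<in> resolvent_set SA A" and zD: "z \<in> resolvent_set SD D"
    and zB: "z \<in> resolvent_set (SA \<times> SD) \<A>"
    and T: "bdd_op T" "\<And>p. p \<in> SA \<times> SD \<Longrightarrow> A (fst p) = T (\<A> p)"
  defines "R \<equiv> resolvent (SA \<times> SD) \<A> z"
  shows "bdd_invertible UNIV (M\<^sub>1 z)"
    and "inv (M\<^sub>1 z) = (\<lambda>u. fst (z *\<^sub>C R (u, 0)) - T (z *\<^sub>C R (u, 0) - (u, 0)))"
proof -
  let ?G = "\<lambda>u. fst (z *\<^sub>C R (u, 0)) - T (z *\<^sub>C R (u, 0) - (u, 0))"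
  have "A (fst (R p)) = T (z *\<^sub>C R p - p)" for p
    using T(2)[OF resolventD(2)[OF zB]] resolventD(3)[OF zB, of p]
    by (simp add: R_def algebra_simps)
  then have invM: "inv (M\<^sub>1 z) = ?G"
    using M1_inverse_via_block_resolvent(2)[OF zA zD zB] by (auto simp: R_def scaleC_prod_def)
  have RB: "bdd_op (\<lambda>u. z *\<^sub>C R (u, 0))"
    unfolding R_def
    by (intro bdd_op_compose[OF bdd_op_scaleC] bdd_op_compose[OF resolventD(1)[OF zB]] bdd_op_inl)
  have "bdd_op ?G"
    by (intro bdd_op_diff bdd_op_compose[OF bdd_op_fst RB] bdd_op_compose[OF T(1)] RB bdd_op_inl)
  moreover have "bij (M\<^sub>1 z)" by (rule M1_inverse_via_block_resolvent(1)[OF zA zD zB])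
  ultimately show "bdd_invertible UNIV (M\<^sub>1 z)"
    using invM by (simp add: bdd_invertible_def)
  show "inv (M\<^sub>1 z) = ?G" by (rule invM)
qed

lemma M1_inverse_via_M2_inverse:
  assumes zA: "z \<in> resolvent_set SA A" and zD: "z \<in> resolvent_set SD D"
    and M2: "bdd_invertible UNIV (M\<^sub>2 z)"
  shows "bdd_invertible UNIV (M\<^sub>1 z)" and "inv (M\<^sub>1 z) = (\<lambda>x. x + BR z (inv (M\<^sub>2 z) (CR z x)))"
  using bdd_invertible_ident_minus_swap[OF bdd_op_BR[OF zD] bdd_op_CR[OF zA]] M2
  by (simp_all add: M1_eq M2_eq)

lemma R_bounded_for_block_resolvent:
  assumes Z: "\<And>z. z \<in> Z \<Longrightarrow>
      z \<in> resolvent_set SA A \<and> z \<in> resolvent_set SD D \<and> bdd_invertible UNIV (M\<^sub>1 z)"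
    and RA: "R_bounded_for Ms {(\<lambda>u. z *\<^sub>C resolvent SA A z u) | z. z \<in> Z}"
    and RD: "R_bounded_for Ms {(\<lambda>v. z *\<^sub>C resolvent SD D z v) | z. z \<in> Z}"
    and N: "R_bounded_for Ms {inv (M\<^sub>1 z) | z. z \<in> Z}"
  shows "R_bounded_for Ms {(\<lambda>p. z *\<^sub>C resolvent (SA \<times> SD) \<A> z p) | z. z \<in> Z}"
proof -
  have BR: "R_bounded_for Ms {BR z | z. z \<in> Z}" and CR: "R_bounded_for Ms {CR z | z. z \<in> Z}"
    using R_bounded_for_BR[OF _ RD] R_bounded_for_CR[OF _ RA] Z by blast+
  let ?W = "\<lambda>z p. inv (M\<^sub>1 z) (fst p + BR z (snd p))"
  have W: "R_bounded_for Ms {?W z | z. z \<in> Z}"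
    by (rule R_bounded_for_compose[OF N
          R_bounded_for_add[OF R_bounded_for_const[OF bounded_linear_fst]
          R_bounded_for_compose[OF BR R_bounded_for_const[OF bounded_linear_snd]]]])
  have "R_bounded_for Ms {(\<lambda>p. (z *\<^sub>C resolvent SA A z (?W z p),
      z *\<^sub>C resolvent SD D z (snd p + CR z (?W z p)))) | z. z \<in> Z}"
    by (rule R_bounded_for_Pair[OF R_bounded_for_compose[OF RA W] R_bounded_for_compose[OF RD
          R_bounded_for_add[OF R_bounded_for_const[OF bounded_linear_snd]
            R_bounded_for_compose[OF CR W]]]])
  then show ?thesis
    by (rule R_bounded_for_cong)
      (use Z resolvent_block(2) in \<open>simp add: block_resolvent_def Let_def scaleC_Pair\<close>)
qed

lemma R_bounded_for_M1_inverse_via_block: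
  assumes Z: "\<And>z. z \<in> Z \<Longrightarrow>
      z \<in> resolvent_set SA A \<and> z \<in> resolvent_set SD D \<and> z \<in> resolvent_set (SA \<times> SD) \<A>"
    and inv: "bdd_invertible (SA \<times> SD) \<A>"
    and RB: "R_bounded_for Ms {(\<lambda>p. z *\<^sub>C resolvent (SA \<times> SD) \<A> z p) | z. z \<in> Z}"
  shows "R_bounded_for Ms {inv (M\<^sub>1 z) | z. z \<in> Z}"
proof -
  obtain T where T: "bdd_op T" "\<And>p. p \<in> SA \<times> SD \<Longrightarrow> A (fst p) = T (\<A> p)"
    using A_fst_bounded_by_block[OF inv] by blast
  have inl: "bounded_linear (\<lambda>u::'a. (u, 0::'b))" by (rule bdd_op_bounded_linear[OF bdd_op_inl])
  have R0: "R_bounded_for Ms {(\<lambda>u. z *\<^sub>C resolvent (SA \<times> SD) \<A> z (u, 0)) | z. z \<in> Z}"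
    by (rule R_bounded_for_compose[OF RB R_bounded_for_const[OF inl]])
  have "R_bounded_for Ms {(\<lambda>u. fst (z *\<^sub>C resolvent (SA \<times> SD) \<A> z (u, 0))
      - T (z *\<^sub>C resolvent (SA \<times> SD) \<A> z (u, 0) - (u, 0))) | z. z \<in> Z}"
    by (rule R_bounded_for_diff[OF
          R_bounded_for_compose[OF R_bounded_for_const[OF bounded_linear_fst] R0]
          R_bounded_for_compose[OF R_bounded_for_const[OF bdd_op_bounded_linear[OF T(1)]]
            R_bounded_for_diff[OF R0 R_bounded_for_const[OF inl]]]])
  then show ?thesis
    by (rule R_bounded_for_cong) (use Z M1_bdd_invertible_via_block(2)[OF _ _ _ T] in auto)
qed

lemma R_bounded_for_M1_inverse_via_M2:
  assumes Z: "\<And>z. z \<in> Z \<Longrightarrow>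
      z \<in> resolvent_set SA A \<and> z \<in> resolvent_set SD D \<and> bdd_invertible UNIV (M\<^sub>2 z)"
    and RA: "R_bounded_for Ms {(\<lambda>u. z *\<^sub>C resolvent SA A z u) | z. z \<in> Z}"
    and RD: "R_bounded_for Ms {(\<lambda>v. z *\<^sub>C resolvent SD D z v) | z. z \<in> Z}"
    and N: "R_bounded_for Ms {inv (M\<^sub>2 z) | z. z \<in> Z}"
  shows "R_bounded_for Ms {inv (M\<^sub>1 z) | z. z \<in> Z}"
proof -
  have BR: "R_bounded_for Ms {BR z | z. z \<in> Z}" and CR: "R_bounded_for Ms {CR z | z. z \<in> Z}"
    using R_bounded_for_BR[OF _ RD] R_bounded_for_CR[OF _ RA] Z by blast+
  have "R_bounded_for Ms {(\<lambda>x. x + BR z (inv (M\<^sub>2 z) (CR z x))) | z. z \<in> Z}"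
    by (rule R_bounded_for_add[OF R_bounded_for_const[OF bounded_linear_ident]
          R_bounded_for_compose[OF BR R_bounded_for_compose[OF N CR]]])
  then show ?thesis
    by (rule R_bounded_for_cong) (use Z M1_inverse_via_M2_inverse(2) in auto)
qed

lemma block_resolvent_bounded_outside_imp_M1:
  assumes inv: "bdd_invertible (SA \<times> SD) \<A>"
    and A: "resolvent_bounded_outside Ms SA A \<psi>" and D: "resolvent_bounded_outside Ms SD D \<psi>"
    and B: "resolvent_bounded_outside Ms (SA \<times> SD) \<A> \<psi>"
  shows "inverse_bounded_outside Ms M\<^sub>1 \<psi>"
  unfolding inverse_bounded_outside_def
proof (intro allI impI conjI)
  fix \<phi> assume \<phi>: "\<psi> < \<phi> \<and> \<phi> < pi"
  obtain T where T: "bdd_op T" "\<And>p. p \<in> SA \<times> SD \<Longrightarrow> A (fst p) = T (\<A> p)"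
    using A_fst_bounded_by_block[OF inv] by blast
  have res: "z \<in> resolvent_set SA A \<and> z \<in> resolvent_set SD D \<and> z \<in> resolvent_set (SA \<times> SD) \<A>"
    if "z \<in> csector \<phi> \<union> {0}" for z
    using in_resolvent_set_outside_sector[OF A _ _ A_inv]
      in_resolvent_set_outside_sector[OF D _ _ D_inv]
      in_resolvent_set_outside_sector[OF B _ _ inv] \<phi> that by blast
  then show "\<forall>z\<in>csector \<phi> \<union> {0}. bdd_invertible UNIV (M\<^sub>1 z)"
    using M1_bdd_invertible_via_block(1)[OF _ _ _ T] by blast
  show "R_bounded_for Ms {inv (M\<^sub>1 z) | z. z \<in> csector \<phi>}"
    using res B \<phi> unfolding resolvent_bounded_outside_def
    by (intro R_bounded_for_M1_inverse_via_block[OF _ inv]) auto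
qed

lemma M1_inverse_bounded_outside_imp_block:
  assumes A: "resolvent_bounded_outside Ms SA A \<psi>" and D: "resolvent_bounded_outside Ms SD D \<psi>"
    and \<psi>: "\<psi> < pi" and M: "inverse_bounded_outside Ms M\<^sub>1 \<psi>"
  shows "bdd_invertible (SA \<times> SD) \<A>" and "resolvent_bounded_outside Ms (SA \<times> SD) \<A> \<psi>"
proof -
  have "\<psi> < (\<psi> + pi) / 2" "(\<psi> + pi) / 2 < pi" using \<psi> by auto
  then have "bdd_invertible UNIV (M\<^sub>1 0)"
    using M unfolding inverse_bounded_outside_def by blast
  then show "bdd_invertible (SA \<times> SD) \<A>"
    using resolvent_block(1)[OF zero_in_resolvent_set] by (simp add: zero_in_resolvent_set_iff)
  show "resolvent_bounded_outside Ms (SA \<times> SD) \<A> \<psi>"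
    unfolding resolvent_bounded_outside_def
  proof (intro allI impI conjI)
    fix \<phi> assume \<phi>: "\<psi> < \<phi> \<and> \<phi> < pi"
    have res: "z \<in> resolvent_set SA A \<and> z \<in> resolvent_set SD D \<and> bdd_invertible UNIV (M\<^sub>1 z)"
      if "z \<in> csector \<phi>" for z
      using A D M \<phi> that
      unfolding resolvent_bounded_outside_def inverse_bounded_outside_def by blast
    then show "csector \<phi> \<subseteq> resolvent_set (SA \<times> SD) \<A>"
      using resolvent_block(1) by blast
    show "R_bounded_for Ms {(\<lambda>p. z *\<^sub>C resolvent (SA \<times> SD) \<A> z p) | z. z \<in> csector \<phi>}"
      using A D M \<phi> unfolding resolvent_bounded_outside_def inverse_bounded_outside_def
      by (intro R_bounded_for_block_resolvent[OF res]) auto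
  qed
qed

lemma M2_inverse_bounded_outside_imp_M1:
  assumes A: "resolvent_bounded_outside Ms SA A \<psi>" and D: "resolvent_bounded_outside Ms SD D \<psi>"
    and M: "inverse_bounded_outside Ms M\<^sub>2 \<psi>"
  shows "inverse_bounded_outside Ms M\<^sub>1 \<psi>"
  unfolding inverse_bounded_outside_def
proof (intro allI impI conjI)
  fix \<phi> assume \<phi>: "\<psi> < \<phi> \<and> \<phi> < pi"
  have res: "z \<in> resolvent_set SA A \<and> z \<in> resolvent_set SD D \<and> bdd_invertible UNIV (M\<^sub>2 z)"
    if "z \<in> csector \<phi> \<union> {0}" for z
    using in_resolvent_set_outside_sector[OF A _ _ A_inv]
      in_resolvent_set_outside_sector[OF D _ _ D_inv] M \<phi> that
    unfolding inverse_bounded_outside_def by blast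
  then show "\<forall>z\<in>csector \<phi> \<union> {0}. bdd_invertible UNIV (M\<^sub>1 z)"
    using M1_inverse_via_M2_inverse(1) by blast
  show "R_bounded_for Ms {inv (M\<^sub>1 z) | z. z \<in> csector \<phi>}"
    using A D M \<phi> unfolding resolvent_bounded_outside_def inverse_bounded_outside_def
    by (intro R_bounded_for_M1_inverse_via_M2[OF res]) auto
qed

lemma block_inverse_bounded_outside_iff:
  assumes A: "resolvent_bounded_outside Ms SA A \<psi>" and D: "resolvent_bounded_outside Ms SD D \<psi>"
    and \<psi>: "\<psi> < pi"
  shows "bdd_invertible (SA \<times> SD) \<A> \<and> resolvent_bounded_outside Ms (SA \<times> SD) \<A> \<psi>
    \<longleftrightarrow> inverse_bounded_outside Ms M\<^sub>1 \<psi> \<or> inverse_bounded_outside Ms M\<^sub>2 \<psi>"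
  using block_resolvent_bounded_outside_imp_M1[OF _ A D]
    M1_inverse_bounded_outside_imp_block[OF A D \<psi>]
    M2_inverse_bounded_outside_imp_M1[OF A D] by blast

lemma closure_block_domain: "closure (SA \<times> SD) = UNIV"
  by (simp add: closure_Times A_dense D_dense)

lemma closure_block_range: "bdd_invertible (SA \<times> SD) \<A> \<Longrightarrow> closure (\<A> ` (SA \<times> SD)) = UNIV"
  by (simp add: bdd_invertible_def bij_betw_def)

lemma block_sectorial_iff:
  assumes "sectorial SA A" "sectorial SD D"
    and \<psi>: "max (sect_angle SA A) (sect_angle SD D) \<le> \<psi>" "\<psi> < pi"
  shows "sectorial (SA \<times> SD) \<A> \<and> bdd_invertible (SA \<times> SD) \<A> \<and> sect_angle (SA \<times> SD) \<A> \<le> \<psi>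
    \<longleftrightarrow> inverse_bounded_outside {1} M\<^sub>1 \<psi> \<or> inverse_bounded_outside {1} M\<^sub>2 \<psi>"
proof -
  have "0 \<le> \<psi>" using sect_angle_nonneg[OF assms(1)] \<psi>(1) by linarith
  have A: "resolvent_bounded_outside {1} SA A \<psi>"
    by (rule sectorial_imp_resolvent_bounded_outside[OF assms(1)]) (use \<psi>(1) in simp)
  have D: "resolvent_bounded_outside {1} SD D \<psi>"
    by (rule sectorial_imp_resolvent_bounded_outside[OF assms(2)]) (use \<psi>(1) in simp)
  have "sectorial (SA \<times> SD) \<A> \<and> bdd_invertible (SA \<times> SD) \<A> \<and> sect_angle (SA \<times> SD) \<A> \<le> \<psi>
      \<longleftrightarrow> bdd_invertible (SA \<times> SD) \<A> \<and> resolvent_bounded_outside {1} (SA \<times> SD) \<A> \<psi>"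
    using sectorial_imp_resolvent_bounded_outside resolvent_bounded_outside_imp_sectorial[OF
        lin_op_block closure_block_domain closure_block_range \<open>0 \<le> \<psi>\<close> \<psi>(2)] by blast
  also have "\<dots> \<longleftrightarrow> inverse_bounded_outside {1} M\<^sub>1 \<psi> \<or> inverse_bounded_outside {1} M\<^sub>2 \<psi>"
    by (rule block_inverse_bounded_outside_iff[OF A D \<psi>(2)])
  finally show ?thesis .
qed

lemma block_R_sectorial_iff:
  assumes "R_sectorial SA A" "R_sectorial SD D"
    and \<psi>: "max (R_angle SA A) (R_angle SD D) \<le> \<psi>" "\<psi> < pi"
  shows "R_sectorial (SA \<times> SD) \<A> \<and> bdd_invertible (SA \<times> SD) \<A> \<and> R_angle (SA \<times> SD) \<A> \<le> \<psi>
    \<longleftrightarrow> inverse_bounded_outside UNIV M\<^sub>1 \<psi> \<or> inverse_bounded_outside UNIV M\<^sub>2 \<psi>"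
proof -
  have "0 \<le> \<psi>" using R_angle_nonneg[OF assms(1)] \<psi>(1) by linarith
  have A: "resolvent_bounded_outside UNIV SA A \<psi>" and D: "resolvent_bounded_outside UNIV SD D \<psi>"
    using assms by (auto intro: R_sectorial_imp_resolvent_bounded_outside)
  have "R_sectorial (SA \<times> SD) \<A> \<and> bdd_invertible (SA \<times> SD) \<A> \<and> R_angle (SA \<times> SD) \<A> \<le> \<psi>
      \<longleftrightarrow> bdd_invertible (SA \<times> SD) \<A> \<and> resolvent_bounded_outside UNIV (SA \<times> SD) \<A> \<psi>"
    using R_sectorial_imp_resolvent_bounded_outside resolvent_bounded_outside_imp_R_sectorial[OF
        lin_op_block closure_block_domain closure_block_range \<open>0 \<le> \<psi>\<close> \<psi>(2)] by blast
  also have "\<dots> \<longleftrightarrow> inverse_bounded_outside UNIV M\<^sub>1 \<psi> \<or> inverse_bounded_outside UNIV M\<^sub>2 \<psi>"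
    by (rule block_inverse_bounded_outside_iff[OF A D \<psi>(2)])
  finally show ?thesis .
qed

end

theorem corollary4p3:
  fixes SA :: "'a::{cplx_normed_vector, banach} set" and A :: "'a \<Rightarrow> 'a"
    and SD :: "'b::{cplx_normed_vector, banach} set" and D :: "'b \<Rightarrow> 'b"
    and SB :: "'b set" and B :: "'b \<Rightarrow> 'a"
    and SC :: "'a set" and C :: "'a \<Rightarrow> 'b"
    and cA cD L :: real
  assumes A_cl: "closed_op SA A" and A_dense: "closure SA = UNIV"
    and D_cl: "closed_op SD D" and D_dense: "closure SD = UNIV"
    and B_lin: "lin_op SB B" and C_lin: "lin_op SC C"
    and dom_D: "SD \<subseteq> SB" and dom_A: "SA \<subseteq> SC"
    and cA: "cA \<ge> 0" and cD: "cD \<ge> 0" and L: "L \<ge> 0"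
    and C_rel: "\<forall>x\<in>SA. norm (C x) \<le> cA * norm (A x) + L * norm x"
    and B_rel: "\<forall>y\<in>SD. norm (B y) \<le> cD * norm (D y) + L * norm y"
    and A_inv: "bdd_invertible SA A" and D_inv: "bdd_invertible SD D"
  shows
    "(sectorial SA A \<and> sectorial SD D \<longrightarrow>
      (\<forall>\<psi>. max (sect_angle SA A) (sect_angle SD D) \<le> \<psi> \<and> \<psi> < pi \<longrightarrow>
        ((sectorial (SA \<times> SD) (block_op A B C D)
            \<and> bdd_invertible (SA \<times> SD) (block_op A B C D)
            \<and> sect_angle (SA \<times> SD) (block_op A B C D) \<le> \<psi>)
         \<longleftrightarrow>
         ((\<forall>\<phi>. \<psi> < \<phi> \<and> \<phi> < pi \<longrightarrow>
             (\<forall>z\<in>csector \<phi> \<union> {0}. bdd_invertible UNIV (M1 SA A B C SD D z))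
             \<and> (\<exists>K. \<forall>z\<in>csector \<phi>. onorm (inv (M1 SA A B C SD D z)) \<le> K))
          \<or>
          (\<forall>\<phi>. \<psi> < \<phi> \<and> \<phi> < pi \<longrightarrow>
             (\<forall>z\<in>csector \<phi> \<union> {0}. bdd_invertible UNIV (M2 SA A B C SD D z))
             \<and> (\<exists>K. \<forall>z\<in>csector \<phi>. onorm (inv (M2 SA A B C SD D z)) \<le> K))))))
     \<and>
     (R_sectorial SA A \<and> R_sectorial SD D \<longrightarrow>
      (\<forall>\<psi>. max (R_angle SA A) (R_angle SD D) \<le> \<psi> \<and> \<psi> < pi \<longrightarrow>
        ((R_sectorial (SA \<times> SD) (block_op A B C D)
            \<and> bdd_invertible (SA \<times> SD) (block_op A B C D)
            \<and> R_angle (SA \<times> SD) (block_op A B C D) \<le> \<psi>)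
         \<longleftrightarrow>
         ((\<forall>\<phi>. \<psi> < \<phi> \<and> \<phi> < pi \<longrightarrow>
             (\<forall>z\<in>csector \<phi> \<union> {0}. bdd_invertible UNIV (M1 SA A B C SD D z))
             \<and> R_bounded {inv (M1 SA A B C SD D z) | z. z \<in> csector \<phi>})
          \<or>
          (\<forall>\<phi>. \<psi> < \<phi> \<and> \<phi> < pi \<longrightarrow>
             (\<forall>z\<in>csector \<phi> \<union> {0}. bdd_invertible UNIV (M2 SA A B C SD D z))
             \<and> R_bounded {inv (M2 SA A B C SD D z) | z. z \<in> csector \<phi>})))))"
proof -
  interpret block_operator_matrix SA A SD D SB B SC C
    by unfold_locales (use assms in \<open>auto simp: closed_op_def relatively_bounded_def\<close>)
  show ?thesis
    unfolding inverse_bounded_outside_one_iff[symmetric] inverse_bounded_outside_UNIV_iff[symmetric]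
    by (intro conjI impI allI; elim conjE) (simp_all add: block_sectorial_iff block_R_sectorial_iff)
qed

end
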